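(* Let $a\in(0,1)$ and consider the planar system $$\dot x = x\left(\tfrac12|x|^a-|y|\right),\qquad \dot y = y|y|\,(|x|^a-|y|).$$ Then the equilibrium $0$ is fragmentarily asymptotically stable but not essentially asymptotically stable.
   Context: For a flow on $\mathbb{R}^n$, $\ell$ denotes Lebesgue measure and $B_\delta(X)$ the $\delta$-neighbourhood of a set $X$. The basin ${\cal B}(X)$ is the set of points whose $\omega$-limit set lies in $X$; for $\delta>0$ the $\delta$-local basin ${\cal B}_\delta(X)$ is the set of points of ${\cal B}(X)$ whose forward trajectory never leaves $B_\delta(X)$. $X$ is fragmentarily asymptotically stable (f.a.s.) if $\ell({\cal B}_\delta(X))>0$ for every $\delta>0$. $X$ is asymptotically stable relative to a set $N$ if for every neighbourhood $U$ of $X$ there is a neighbourhood $V$ of $X$ such that trajectories starting in $V\cap N$ remain in $U$ for all positive time, and there is a neighbourhood $W$ of $X$ such that trajectories starting in $W\cap N$ have $\omega$-limit set in $X$. $X$ is essentially asymptotically stable (e.a.s.) if it is asymptotically stable relative to some $N$ with $\lim_{\varepsilon\to0}\ell(B_\varepsilon(X)\cap N)/\ell(B_\varepsilon(X))=1$. Here $X=\{0\}$. *)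

theory Defs
  imports "HOL-Analysis.Analysis"
begin

type_synonym pt = "real \<times> real"

definition vf :: "real \<Rightarrow> pt \<Rightarrow> pt" where
  "vf a p = (let x = fst p; y = snd p in
     (x * ((1/2) * \<bar>x\<bar> powr a - \<bar>y\<bar>), y * \<bar>y\<bar> * (\<bar>x\<bar> powr a - \<bar>y\<bar>)))"

definition sol_on :: "(pt \<Rightarrow> pt) \<Rightarrow> pt \<Rightarrow> real \<Rightarrow> (real \<Rightarrow> pt) \<Rightarrow> bool" where
  "sol_on F p T \<gamma> \<longleftrightarrow> 0 \<le> T \<and> \<gamma> 0 = p \<and>
     (\<forall>t\<in>{0..T}. (\<gamma> has_vector_derivative F (\<gamma> t)) (at t within {0..T}))"

definition complete_sol :: "(pt \<Rightarrow> pt) \<Rightarrow> pt \<Rightarrow> (real \<Rightarrow> pt) \<Rightarrow> bool" where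
  "complete_sol F p \<gamma> \<longleftrightarrow> \<gamma> 0 = p \<and>
     (\<forall>t\<ge>0. (\<gamma> has_vector_derivative F (\<gamma> t)) (at t within {0..}))"

definition omega_limit :: "(real \<Rightarrow> pt) \<Rightarrow> pt set" where
  "omega_limit \<gamma> = {q. \<exists>s::nat \<Rightarrow> real. filterlim s at_top sequentially \<and> (\<gamma> \<circ> s) \<longlonglongrightarrow> q}"

definition stays_in :: "(pt \<Rightarrow> pt) \<Rightarrow> pt \<Rightarrow> pt set \<Rightarrow> bool" where
  "stays_in F p U \<longleftrightarrow> (\<forall>T \<gamma>. sol_on F p T \<gamma> \<longrightarrow> (\<forall>t\<in>{0..T}. \<gamma> t \<in> U))"

definition attracted :: "(pt \<Rightarrow> pt) \<Rightarrow> pt set \<Rightarrow> pt \<Rightarrow> bool" where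
  "attracted F X p \<longleftrightarrow> (\<exists>\<gamma>. complete_sol F p \<gamma>) \<and>
     (\<forall>\<gamma>. complete_sol F p \<gamma> \<longrightarrow> omega_limit \<gamma> \<subseteq> X)"

definition nbhd :: "pt set \<Rightarrow> real \<Rightarrow> pt set" where
  "nbhd X \<delta> = {y. \<exists>x\<in>X. dist y x < \<delta>}"

definition basin :: "(pt \<Rightarrow> pt) \<Rightarrow> pt set \<Rightarrow> pt set" where
  "basin F X = {p. attracted F X p}"

definition local_basin :: "(pt \<Rightarrow> pt) \<Rightarrow> pt set \<Rightarrow> real \<Rightarrow> pt set" where
  "local_basin F X \<delta> = {p \<in> basin F X. stays_in F p (nbhd X \<delta>)}"

definition frag_as :: "(pt \<Rightarrow> pt) \<Rightarrow> pt set \<Rightarrow> bool" where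
  "frag_as F X \<longleftrightarrow> (\<forall>\<delta>>0. local_basin F X \<delta> \<in> sets lebesgue \<and>
      emeasure lebesgue (local_basin F X \<delta>) > 0)"

definition as_rel :: "(pt \<Rightarrow> pt) \<Rightarrow> pt set \<Rightarrow> pt set \<Rightarrow> bool" where
  "as_rel F X N \<longleftrightarrow>
     (\<forall>U. open U \<and> X \<subseteq> U \<longrightarrow>
        (\<exists>V. open V \<and> X \<subseteq> V \<and> (\<forall>p\<in>V \<inter> N. stays_in F p U))) \<and>
     (\<exists>W. open W \<and> X \<subseteq> W \<and> (\<forall>p\<in>W \<inter> N. attracted F X p))"

definition ess_as :: "(pt \<Rightarrow> pt) \<Rightarrow> pt set \<Rightarrow> bool" where
  "ess_as F X \<longleftrightarrow> (\<exists>N \<in> sets lebesgue. as_rel F X N \<and>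
     ((\<lambda>\<epsilon>. measure lebesgue (nbhd X \<epsilon> \<inter> N) / measure lebesgue (nbhd X \<epsilon>)) \<longlongrightarrow> 1)
       (at_right 0))"

end

theory Submission
  imports Defs
begin

text \<open>
  The field is not Lipschitz at \<open>x = 0\<close>, but adjoining \<open>w = \<bar>x\<bar> powr a\<close> as a coordinate turns it
  into one that is Lipschitz on bounded sets. So solutions are unique, can be built by Picard
  iteration, and depend continuously on the initial point.

  Where \<open>\<bar>y\<bar> > \<bar>x\<bar> powr a / 2\<close>, the ratio \<open>\<bar>y\<bar> / \<bar>x\<bar> powr a\<close> stays above some \<open>c > 1/2\<close>; hence
  \<open>\<bar>x\<bar>\<close> and then \<open>\<bar>y\<bar>\<close> decrease to \<open>0\<close>, and a small open set near \<open>(0, \<delta>/2)\<close> lies in the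
  \<open>\<delta>\<close>-local basin. Every other orbit converging to \<open>0\<close> must enter this region, so by continuous
  dependence the local basin is open away from the origin, hence measurable: the origin is
  fragmentarily asymptotically stable.

  In the cusp \<open>4 \<bar>y\<bar> < \<bar>x\<bar> powr a\<close>, however, \<open>\<bar>x\<bar>\<close> grows as long as \<open>\<bar>x\<bar> powr a < a\<close>, so these points
  leave every small ball. As \<open>a < 1\<close>, the complement of the cusp in the \<open>\<epsilon>\<close>-ball has measure
  \<open>O(\<epsilon> powr (1 + 1/a)) = o(\<epsilon>\<^sup>2)\<close>, so every set of density \<open>1\<close> at the origin meets the cusp
  arbitrarily close to it, which rules out essential asymptotic stability.
\<close>

section \<open>Differential inequalities\<close>

lemma has_real_derivative_nonneg_imp_mono:
  fixes f f' :: "real \<Rightarrow> real"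
  assumes deriv: "\<And>t. t \<in> {a..b} \<Longrightarrow> (f has_real_derivative f' t) (at t within {a..b})"
    and nonneg: "\<And>t. t \<in> {a..b} \<Longrightarrow> 0 \<le> f' t" and st: "a \<le> s" "s \<le> t" "t \<le> b"
  shows "f s \<le> f t"
proof (rule DERIV_nonneg_imp_increasing_open[OF st(2)])
  fix x assume x: "s < x" "x < t"
  then have "at x within {a..b} = at x" using st by (intro at_within_Icc_at) auto
  then show "\<exists>y. (f has_real_derivative y) (at x) \<and> 0 \<le> y"
    using deriv[of x] nonneg[of x] x st by auto
next
  have "continuous_on {a..b} f"
    using deriv by (meson DERIV_continuous continuous_on_eq_continuous_within)
  then show "continuous_on {s..t} f"
    by (rule continuous_on_subset) (use st in auto)
qed

lemma has_real_derivative_nonpos_imp_antimono: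
  fixes f f' :: "real \<Rightarrow> real"
  assumes deriv: "\<And>t. t \<in> {a..b} \<Longrightarrow> (f has_real_derivative f' t) (at t within {a..b})"
    and nonpos: "\<And>t. t \<in> {a..b} \<Longrightarrow> f' t \<le> 0" and st: "a \<le> s" "s \<le> t" "t \<le> b"
  shows "f t \<le> f s"
proof -
  have "- f s \<le> - f t"
    by (rule has_real_derivative_nonneg_imp_mono[where f="\<lambda>x. - f x" and f'="\<lambda>x. - f' x"])
      (auto intro!: derivative_eq_intros deriv simp: nonpos st)
  then show ?thesis by simp
qed

lemma negative_if_no_first_zero:
  fixes h :: "real \<Rightarrow> real"
  assumes cont: "continuous_on {t0..T} h" and h0: "h t0 < 0"
    and no_first_zero: "\<And>t. t \<in> {t0..T} \<Longrightarrow> t0 < t \<Longrightarrow> h t = 0 \<Longrightarrow> (\<forall>s\<in>{t0..<t}. h s < 0) \<Longrightarrow> False"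
    and t: "t \<in> {t0..T}"
  shows "h t < 0"
proof (rule ccontr)
  assume "\<not> h t < 0"
  define Z where "Z = {t0..t} \<inter> h -` {0..}"
  have "closed Z" unfolding Z_def
    by (rule continuous_closed_preimage) (use cont t in \<open>auto intro: continuous_on_subset\<close>)
  moreover have tZ: "t \<in> Z" using \<open>\<not> h t < 0\<close> t by (auto simp: Z_def)
  moreover have bdd: "bdd_below Z" by (auto simp: Z_def bdd_below_def)
  ultimately have t1Z: "Inf Z \<in> Z" by (intro closed_contains_Inf) auto
  define t1 where "t1 = Inf Z"
  have t1: "t0 \<le> t1" "t1 \<le> t" "0 \<le> h t1"
    using t1Z cInf_lower[OF tZ bdd] by (auto simp: Z_def t1_def)
  have below: "h s < 0" if "s \<in> {t0..<t1}" for s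
    using cInf_lower[of s Z] that t1 bdd by (force simp: Z_def t1_def)
  obtain s where s: "t0 \<le> s" "s \<le> t1" "h s = 0"
    using IVT'[of h t0 0 t1] h0 t1 cont t by (force intro: continuous_on_subset)
  then have "h t1 = 0" "t0 < t1"
    using below[of s] h0 by (auto simp: le_less)
  then show False using no_first_zero[of t1] below t1 t by auto
qed

lemma has_real_derivative_nonneg_at_first_zero:
  fixes h :: "real \<Rightarrow> real"
  assumes deriv: "(h has_real_derivative D) (at t within {t0..T})" and t: "t0 < t" "t \<le> T"
    and ht: "h t = 0" and below: "\<forall>s\<in>{t0..<t}. h s < 0"
  shows "0 \<le> D"
proof (rule ccontr)
  assume "\<not> 0 \<le> D"
  from has_real_derivative_neg_dec_left[OF deriv] this obtain e where e: "e > 0"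
    and dec: "\<And>k. k > 0 \<Longrightarrow> t - k \<in> {t0..T} \<Longrightarrow> k < e \<Longrightarrow> h t < h (t - k)" by auto
  define k where "k = min (e/2) ((t - t0)/2)"
  have "k > 0" "k < e" "k \<le> (t - t0)/2"
    using e t min.cobounded1[of "e/2" "(t - t0)/2"] min.cobounded2[of "e/2" "(t - t0)/2"]
    unfolding k_def by auto
  then have "k > 0" "k < e" "t - k \<in> {t0..T}" "t - k \<in> {t0..<t}"
    using t by auto
  then show False using dec below ht by force
qed

lemma negative_barrier:
  fixes h h' :: "real \<Rightarrow> real"
  assumes deriv: "\<And>t. t \<in> {t0..T} \<Longrightarrow> (h has_real_derivative h' t) (at t within {t0..T})"
    and h0: "h t0 < 0"
    and crossing: "\<And>t. t \<in> {t0..T} \<Longrightarrow> t0 < t \<Longrightarrow> h t = 0 \<Longrightarrow> (\<forall>s\<in>{t0..<t}. h s < 0) \<Longrightarrow> h' t < 0"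
    and t: "t \<in> {t0..T}"
  shows "h t < 0"
proof (rule negative_if_no_first_zero[where h=h, OF _ h0 _ t])
  show "continuous_on {t0..T} h"
    using deriv by (meson DERIV_continuous continuous_on_eq_continuous_within)
  fix s assume s: "s \<in> {t0..T}" "t0 < s" "h s = 0" "\<forall>u\<in>{t0..<s}. h u < 0"
  then have "0 \<le> h' s" by (intro has_real_derivative_nonneg_at_first_zero[OF deriv]) auto
  with crossing[OF s] show False by simp
qed

text \<open>\<open>u\<^sup>2 exp (\<mp>K t)\<close> is monotone for a bound \<open>K\<close> of \<open>2 \<bar>k\<bar>\<close>.\<close>

lemma linear_scalar_ode_zero_iff:
  fixes u k :: "real \<Rightarrow> real"
  assumes deriv: "\<And>s. s \<in> {0..T} \<Longrightarrow> (u has_real_derivative u s * k s) (at s within {0..T})"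
    and cont: "continuous_on {0..T} k" and t: "t \<in> {0..T}"
  shows "u t = 0 \<longleftrightarrow> u 0 = 0"
proof -
  have "compact ((\<lambda>s. 2 * k s) ` {0..T})"
    using cont by (intro compact_continuous_image continuous_intros) auto
  then obtain K where K: "\<And>s. s \<in> {0..T} \<Longrightarrow> \<bar>2 * k s\<bar> \<le> K"
    by (force dest: compact_imp_bounded simp: bounded_iff)
  have sq: "((\<lambda>s. (u s)^2) has_real_derivative (u s)^2 * (2 * k s)) (at s within {0..T})"
    if "s \<in> {0..T}" for s
    by (rule derivative_eq_intros deriv[OF that] refl | simp add: power2_eq_square algebra_simps)+
  have "(u t)^2 * exp (- K * t) \<le> (u 0)^2 * exp (- K * 0)"
  proof (rule has_real_derivative_nonpos_imp_antimono[where f="\<lambda>s. (u s)^2 * exp (- K * s)"])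
    fix s assume s: "s \<in> {0..T}"
    show "((\<lambda>s. (u s)^2 * exp (- K * s)) has_real_derivative
        (u s)^2 * exp (- K * s) * (2 * k s - K)) (at s within {0..T})"
      by (rule derivative_eq_intros sq[OF s] refl | simp add: algebra_simps)+
    show "(u s)^2 * exp (- K * s) * (2 * k s - K) \<le> 0"
      using K[OF s] by (intro mult_nonneg_nonpos) auto
  qed (use t in auto)
  moreover have "(u 0)^2 * exp (K * 0) \<le> (u t)^2 * exp (K * t)"
  proof (rule has_real_derivative_nonneg_imp_mono[where f="\<lambda>s. (u s)^2 * exp (K * s)"])
    fix s assume s: "s \<in> {0..T}"
    show "((\<lambda>s. (u s)^2 * exp (K * s)) has_real_derivative
        (u s)^2 * exp (K * s) * (2 * k s + K)) (at s within {0..T})"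
      by (rule derivative_eq_intros sq[OF s] refl | simp add: algebra_simps)+
    show "0 \<le> (u s)^2 * exp (K * s) * (2 * k s + K)"
      using K[OF s] by (intro mult_nonneg_nonneg) auto
  qed (use t in auto)
  ultimately have "(u t)^2 * exp (- K * t) \<le> (u 0)^2" "(u 0)^2 \<le> (u t)^2 * exp (K * t)"
    by simp_all
  then show ?thesis by (auto simp: mult_le_0_iff)
qed

text \<open>Gronwall: \<open>\<parallel>g\<^sub>1 - g\<^sub>2\<parallel>\<^sup>2 exp (-2 L t)\<close> is nonincreasing.\<close>

lemma lipschitz_ode_solutions_dist_le:
  fixes f :: "'a::real_inner \<Rightarrow> 'a" and g1 g2 :: "real \<Rightarrow> 'a"
  assumes L: "0 \<le> L" and lip: "\<And>u v. u \<in> S \<Longrightarrow> v \<in> S \<Longrightarrow> norm (f u - f v) \<le> L * norm (u - v)"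
    and d1: "\<And>t. t \<in> {0..T} \<Longrightarrow> (g1 has_vector_derivative f (g1 t)) (at t within {0..T})"
    and d2: "\<And>t. t \<in> {0..T} \<Longrightarrow> (g2 has_vector_derivative f (g2 t)) (at t within {0..T})"
    and S1: "\<And>t. t \<in> {0..T} \<Longrightarrow> g1 t \<in> S" and S2: "\<And>t. t \<in> {0..T} \<Longrightarrow> g2 t \<in> S"
    and t: "t \<in> {0..T}"
  shows "norm (g1 t - g2 t) \<le> norm (g1 0 - g2 0) * exp (L * t)"
proof -
  define h where "h s = inner (g1 s - g2 s) (g1 s - g2 s)" for s
  define D where "D s = 2 * inner (g1 s - g2 s) (f (g1 s) - f (g2 s))" for s
  have hd: "(h has_real_derivative D s) (at s within {0..T})" if s: "s \<in> {0..T}" for s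
  proof -
    have "(h has_derivative (\<lambda>x. inner (g1 s - g2 s) (x *\<^sub>R f (g1 s) - x *\<^sub>R f (g2 s))
        + inner (x *\<^sub>R f (g1 s) - x *\<^sub>R f (g2 s)) (g1 s - g2 s))) (at s within {0..T})"
      using d1[OF s] d2[OF s] unfolding h_def has_vector_derivative_def
      by (intro derivative_eq_intros) auto
    then show ?thesis unfolding has_field_derivative_def D_def
      by (rule has_derivative_eq_rhs)
        (auto simp: fun_eq_iff inner_commute algebra_simps inner_diff_right inner_diff_left)
  qed
  have D_le: "D s \<le> 2 * L * h s" if s: "s \<in> {0..T}" for s
  proof -
    have "inner (g1 s - g2 s) (f (g1 s) - f (g2 s)) \<le> norm (g1 s - g2 s) * norm (f (g1 s) - f (g2 s))"
      by (rule norm_cauchy_schwarz)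
    also have "\<dots> \<le> norm (g1 s - g2 s) * (L * norm (g1 s - g2 s))"
      by (intro mult_left_mono lip S1 S2 s) auto
    also have "\<dots> = L * h s" by (simp add: h_def power2_norm_eq_inner[symmetric] power2_eq_square)
    finally show ?thesis by (simp add: D_def)
  qed
  have "h t * exp (- (2*L) * t) \<le> h 0 * exp (- (2*L) * 0)"
  proof (rule has_real_derivative_nonpos_imp_antimono[where f="\<lambda>s. h s * exp (- (2*L) * s)"])
    fix s assume s: "s \<in> {0..T}"
    show "((\<lambda>s. h s * exp (- (2*L) * s)) has_real_derivative exp (- (2*L) * s) * (D s - 2 * L * h s))
        (at s within {0..T})"
      by (rule derivative_eq_intros hd[OF s] refl | simp add: algebra_simps)+
    show "exp (- (2*L) * s) * (D s - 2 * L * h s) \<le> 0"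
      using D_le[OF s] by (simp add: mult_nonneg_nonpos)
  qed (use t in auto)
  then have "(norm (g1 t - g2 t))^2 \<le> (norm (g1 0 - g2 0) * exp (L * t))^2"
    by (simp add: h_def power2_norm_eq_inner power_mult_distrib exp_double[symmetric] exp_minus
        field_simps)
  then show ?thesis by (rule power2_le_imp_le) simp
qed

section \<open>Global solutions of Lipschitz systems\<close>

primrec picard_iter :: "('a::euclidean_space \<Rightarrow> 'a) \<Rightarrow> 'a \<Rightarrow> nat \<Rightarrow> real \<Rightarrow> 'a" where
  "picard_iter f p 0 = (\<lambda>t. p)"
| "picard_iter f p (Suc n) = (\<lambda>t. p + integral {0..t} (\<lambda>s. f (picard_iter f p n s)))"

definition picard_limit :: "('a::euclidean_space \<Rightarrow> 'a) \<Rightarrow> 'a \<Rightarrow> real \<Rightarrow> 'a" where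
  "picard_limit f p t = p + (\<Sum>i. picard_iter f p (Suc i) t - picard_iter f p i t)"

context
  fixes f :: "'a::euclidean_space \<Rightarrow> 'a" and L :: real
  assumes L: "0 \<le> L" and lip: "\<And>u v. norm (f u - f v) \<le> L * norm (u - v)"
begin

lemma continuous_on_lipschitz_field: "continuous_on S f"
  by (rule lipschitz_on_continuous_on[of L]) (rule lipschitz_onI, use lip L in \<open>auto simp: dist_norm\<close>)

lemma continuous_on_picard_iter: "continuous_on {0..T} (picard_iter f p n)"
proof (induction n)
  case (Suc n)
  then have "continuous_on {0..T} (\<lambda>s. f (picard_iter f p n s))"
    by (intro continuous_on_compose2[OF continuous_on_lipschitz_field[of UNIV]]) auto
  then have "continuous_on {0..T} (\<lambda>t. integral {0..t} (\<lambda>s. f (picard_iter f p n s)))"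
    by (intro indefinite_integral_continuous_1 integrable_continuous_real)
  then show ?case by (auto intro: continuous_intros)
qed simp

lemma continuous_on_field_picard_iter: "continuous_on {0..T} (\<lambda>s. f (picard_iter f p n s))"
  by (intro continuous_on_compose2[OF continuous_on_lipschitz_field[of UNIV]] continuous_on_picard_iter) auto

lemma integrable_picard_iter: "(\<lambda>s. f (picard_iter f p n s)) integrable_on {0..T}"
  by (intro integrable_continuous_real continuous_on_field_picard_iter)

lemma picard_iter_step_le:
  assumes "0 \<le> t"
  shows "norm (picard_iter f p (Suc n) t - picard_iter f p n t) \<le> norm (f p) * L^n * t^Suc n / fact (Suc n)"
  using assms
proof (induction n arbitrary: t)
  case (Suc n)
  define c where "c = L * norm (f p) * L^n / fact (Suc n)"
  have int: "((\<lambda>s. c * s^Suc n) has_integral c * (t^Suc (Suc n) / Suc (Suc n))) {0..t}"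
  proof -
    have "((\<lambda>s. c * (s^Suc (Suc n) / Suc (Suc n))) has_real_derivative c * s^Suc n) (at s within {0..t})" for s
      by (rule derivative_eq_intros refl | simp del: of_nat_Suc)+
    then show ?thesis
      using fundamental_theorem_of_calculus[of 0 t "\<lambda>s. c * (s^Suc (Suc n) / Suc (Suc n))"] Suc.prems
      by (simp add: has_real_derivative_iff_has_vector_derivative)
  qed
  have step: "picard_iter f p (Suc m) t = p + integral {0..t} (\<lambda>s. f (picard_iter f p m s))" for m
    by simp
  have "norm (picard_iter f p (Suc (Suc n)) t - picard_iter f p (Suc n) t)
      = norm (integral {0..t} (\<lambda>s. f (picard_iter f p (Suc n) s) - f (picard_iter f p n s)))"
    by (simp only: step add_diff_cancel_left integral_diff[OF integrable_picard_iter integrable_picard_iter])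
  also have "\<dots> \<le> integral {0..t} (\<lambda>s. c * s^Suc n)"
  proof (rule integral_norm_bound_integral)
    show "(\<lambda>s. f (picard_iter f p (Suc n) s) - f (picard_iter f p n s)) integrable_on {0..t}"
      by (intro integrable_diff integrable_picard_iter)
    show "(\<lambda>s. c * s^Suc n) integrable_on {0..t}" using int by blast
    fix s assume s: "s \<in> {0..t}"
    have "norm (f (picard_iter f p (Suc n) s) - f (picard_iter f p n s))
        \<le> L * norm (picard_iter f p (Suc n) s - picard_iter f p n s)" by (rule lip)
    also have "\<dots> \<le> L * (norm (f p) * L^n * s^Suc n / fact (Suc n))"
      using Suc.IH[of s] s L by (intro mult_left_mono) auto
    finally show "norm (f (picard_iter f p (Suc n) s) - f (picard_iter f p n s)) \<le> c * s^Suc n"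
      by (simp add: c_def)
  qed
  also have "\<dots> = norm (f p) * L^Suc n * t^Suc (Suc n) / fact (Suc (Suc n))"
    using integral_unique[OF int] by (simp add: c_def field_simps)
  finally show ?case .
qed simp

lemma uniform_limit_picard_iter:
  assumes T: "0 \<le> T"
  shows "uniform_limit {0..T} (picard_iter f p) (picard_limit f p) sequentially"
proof -
  define M where "M n = norm (f p) * L^n * T^Suc n / fact (Suc n)" for n
  have "summable M"
  proof (rule summable_comparison_test')
    show "summable (\<lambda>n. (norm (f p) * T) * (inverse (fact n) * (L*T)^n))"
      by (intro summable_mult summable_exp)
    fix n :: nat
    have "norm (f p) * T * (L*T)^n / fact (Suc n) \<le> norm (f p) * T * (L*T)^n / fact n"
      using L T by (intro divide_left_mono fact_mono) auto
    then show "norm (M n) \<le> (norm (f p) * T) * (inverse (fact n) * (L*T)^n)"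
      using L T by (simp add: M_def power_mult_distrib field_simps)
  qed
  then have "uniform_limit {0..T} (\<lambda>n t. \<Sum>i<n. picard_iter f p (Suc i) t - picard_iter f p i t)
      (\<lambda>t. \<Sum>i. picard_iter f p (Suc i) t - picard_iter f p i t) sequentially"
  proof (rule Weierstrass_m_test[rotated])
    fix n t assume t: "t \<in> {0..T}"
    have "norm (picard_iter f p (Suc n) t - picard_iter f p n t) \<le> norm (f p) * L^n * t^Suc n / fact (Suc n)"
      using t by (intro picard_iter_step_le) auto
    also have "\<dots> \<le> M n"
      unfolding M_def using t L by (intro divide_right_mono mult_left_mono power_mono) auto
    finally show "norm (picard_iter f p (Suc n) t - picard_iter f p n t) \<le> M n" .
  qed
  then have "uniform_limit {0..T} (\<lambda>n t. p + (\<Sum>i<n. picard_iter f p (Suc i) t - picard_iter f p i t))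
      (\<lambda>t. p + (\<Sum>i. picard_iter f p (Suc i) t - picard_iter f p i t)) sequentially"
    by (intro uniform_limit_intros) auto
  moreover have "p + (\<Sum>i<n. picard_iter f p (Suc i) t - picard_iter f p i t) = picard_iter f p n t" for n t
    using sum_lessThan_telescope[of "\<lambda>i. picard_iter f p i t" n] by simp
  ultimately show ?thesis by (simp add: picard_limit_def[abs_def])
qed

lemma uniform_limit_field_picard_iter:
  assumes "0 \<le> T"
  shows "uniform_limit {0..T} (\<lambda>n s. f (picard_iter f p n s)) (\<lambda>s. f (picard_limit f p s)) sequentially"
  unfolding uniform_limit_iff
proof (intro allI impI)
  fix e :: real assume e: "e > 0"
  have "\<forall>\<^sub>F n in sequentially. \<forall>s\<in>{0..T}. dist (picard_iter f p n s) (picard_limit f p s) < e / (L + 1)"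
    using uniform_limit_picard_iter[OF assms] e L unfolding uniform_limit_iff by auto
  then show "\<forall>\<^sub>F n in sequentially. \<forall>s\<in>{0..T}. dist (f (picard_iter f p n s)) (f (picard_limit f p s)) < e"
  proof (rule eventually_mono, intro ballI)
    fix n s assume "\<forall>s\<in>{0..T}. dist (picard_iter f p n s) (picard_limit f p s) < e / (L + 1)" "s \<in> {0..T}"
    then have "dist (picard_iter f p n s) (picard_limit f p s) < e / (L + 1)" by blast
    then have "L * dist (picard_iter f p n s) (picard_limit f p s) \<le> L * (e / (L + 1))"
      using L by (rule mult_left_mono[OF less_imp_le])
    also have "\<dots> < e" using L e by (simp add: field_simps)
    finally show "dist (f (picard_iter f p n s)) (f (picard_limit f p s)) < e"
      using lip[of "picard_iter f p n s" "picard_limit f p s"] by (simp add: dist_norm)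
  qed
qed

lemma picard_limit_eq_integral:
  assumes t: "0 \<le> t"
  shows "picard_limit f p t = p + integral {0..t} (\<lambda>s. f (picard_limit f p s))"
proof -
  obtain I J where I: "\<And>n. ((\<lambda>s. f (picard_iter f p n s)) has_integral I n) {0..t}"
    and J: "((\<lambda>s. f (picard_limit f p s)) has_integral J) {0..t}" and IJ: "I \<longlonglongrightarrow> J"
    by (rule uniform_limit_integral[OF uniform_limit_field_picard_iter[OF t]])
      (auto intro: continuous_on_field_picard_iter)
  have "(\<lambda>n. picard_iter f p (Suc n) t) \<longlonglongrightarrow> picard_limit f p t"
    using tendsto_uniform_limitI[OF uniform_limit_picard_iter[OF t], of t] t
    by (intro filterlim_compose[OF _ filterlim_Suc]) auto
  moreover have "(\<lambda>n. picard_iter f p (Suc n) t) = (\<lambda>n. p + I n)"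
    using integral_unique[OF I] by simp
  ultimately have "picard_limit f p t = p + J"
    using IJ by (metis LIMSEQ_unique tendsto_add_const_iff)
  then show ?thesis using J by (simp add: integral_unique)
qed

lemma lipschitz_ode_has_complete_solution:
  "\<exists>\<gamma>. \<gamma> 0 = p \<and> (\<forall>t\<ge>0. (\<gamma> has_vector_derivative f (\<gamma> t)) (at t within {0..}))"
proof (intro exI conjI allI impI)
  show "picard_limit f p 0 = p" using picard_limit_eq_integral[of 0] by simp
  fix t :: real assume t: "0 \<le> t"
  have "continuous_on {0..t+1} (\<lambda>s. f (picard_limit f p s))"
    using uniform_limit_theorem[OF _ uniform_limit_field_picard_iter] continuous_on_field_picard_iter t
    by (auto intro: always_eventually)
  then have "((\<lambda>u. p + integral {0..u} (\<lambda>s. f (picard_limit f p s))) has_vector_derivative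
      f (picard_limit f p t)) (at t within {0..t+1})"
    using t by (auto intro!: derivative_eq_intros integral_has_vector_derivative)
  then have "(picard_limit f p has_vector_derivative f (picard_limit f p t)) (at t within {0..t+1})"
    by (rule has_vector_derivative_transform_within[where d=1]) (use t picard_limit_eq_integral in auto)
  moreover have "at t within {0..} = at t within {0..t+1}"
    by (rule at_within_nhd[where S="{..<t+1}"]) auto
  ultimately show "(picard_limit f p has_vector_derivative f (picard_limit f p t)) (at t within {0..})"
    by simp
qed

end

section \<open>The lifted system\<close>

type_synonym pt3 = "real \<times> real \<times> real"

text \<open>Along solutions of \<open>vf a\<close>, \<open>w = \<bar>x\<bar> powr a\<close> satisfies \<open>w' = a w (w/2 - \<bar>y\<bar>)\<close>.\<close>

definition lifted_vf :: "real \<Rightarrow> pt3 \<Rightarrow> pt3" where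
  "lifted_vf a s = (let x = fst s; w = fst (snd s); y = snd (snd s) in
     (x * (w/2 - \<bar>y\<bar>), a * w * (w/2 - \<bar>y\<bar>), y * \<bar>y\<bar> * (w - \<bar>y\<bar>)))"

definition lifted_lip :: "real \<Rightarrow> real \<Rightarrow> real" where
  "lifted_lip a R = 3 * (3 * (1 + \<bar>a\<bar>) * R + 5 * R^2)"

definition cube_norm :: "pt3 \<Rightarrow> real" where
  "cube_norm s = max \<bar>fst s\<bar> (max \<bar>fst (snd s)\<bar> \<bar>snd (snd s)\<bar>)"

definition clamped_vf :: "real \<Rightarrow> real \<Rightarrow> pt3 \<Rightarrow> pt3" where
  "clamped_vf a R s = lifted_vf a (clamp (- R, - R, - R) (R, R, R) s)"

lemma lifted_lip_nonneg: "0 \<le> R \<Longrightarrow> 0 \<le> lifted_lip a R"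
  by (simp add: lifted_lip_def)

lemma continuous_cube_norm [continuous_intros]:
  "continuous_on S f \<Longrightarrow> continuous_on S (\<lambda>t. cube_norm (f t))"
  unfolding cube_norm_def by (intro continuous_intros)

lemma abs_components_le_norm:
  fixes s :: pt3
  shows "\<bar>fst s\<bar> \<le> norm s" "\<bar>fst (snd s)\<bar> \<le> norm s" "\<bar>snd (snd s)\<bar> \<le> norm s"
proof -
  obtain x w y where s: "s = (x, w, y)" by (cases s) auto
  have "norm x \<le> norm s" "norm w \<le> norm (w, y)" "norm y \<le> norm (w, y)" "norm (w, y) \<le> norm s"
    unfolding s by (rule norm_fst_le norm_snd_le)+
  then show "\<bar>fst s\<bar> \<le> norm s" "\<bar>fst (snd s)\<bar> \<le> norm s" "\<bar>snd (snd s)\<bar> \<le> norm s"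
    by (auto simp: s)
qed

lemma norm_le_sum_abs_components: "norm (s :: pt3) \<le> \<bar>fst s\<bar> + \<bar>fst (snd s)\<bar> + \<bar>snd (snd s)\<bar>"
  using norm_Pair_le[of "fst s" "snd s"] norm_Pair_le[of "fst (snd s)" "snd (snd s)"] by simp

lemma cube_norm_nonneg: "0 \<le> cube_norm s"
  by (simp add: cube_norm_def le_max_iff_disj)

lemma cube_norm_diff_le: "cube_norm u \<le> cube_norm v + norm (u - v)"
  using abs_components_le_norm[of "u - v"] by (auto simp: cube_norm_def)

lemma cube_norm_le_iff_mem_cbox: "cube_norm s \<le> R \<longleftrightarrow> s \<in> cbox (- R, - R, - R) (R, R, R)"
  by (cases s) (auto simp: cube_norm_def cbox_interval abs_le_iff)

lemma cube_norm_clamp_le: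
  assumes "0 \<le> R"
  shows "cube_norm (clamp (- R, - R, - R) (R, R, R) s) \<le> R"
proof -
  have "cbox (- R, - R, - R) (R, R, R) \<noteq> {}"
    using assms cube_norm_le_iff_mem_cbox[of 0 R] by (auto simp: cube_norm_def)
  then show ?thesis
    unfolding cube_norm_le_iff_mem_cbox box_ne_empty by (intro clamp_in_interval) blast
qed

lemma abs_mult_diff_le:
  fixes x1 x2 g1 g2 :: real
  assumes "\<bar>x1\<bar> \<le> A" "\<bar>g2\<bar> \<le> B"
  shows "\<bar>x1 * g1 - x2 * g2\<bar> \<le> A * \<bar>g1 - g2\<bar> + B * \<bar>x1 - x2\<bar>"
proof -
  have "x1 * g1 - x2 * g2 = x1 * (g1 - g2) + (x1 - x2) * g2" by (simp add: algebra_simps)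
  then have "\<bar>x1 * g1 - x2 * g2\<bar> \<le> \<bar>x1\<bar> * \<bar>g1 - g2\<bar> + \<bar>g2\<bar> * \<bar>x1 - x2\<bar>"
    by (metis abs_mult abs_triangle_ineq mult.commute)
  also have "\<dots> \<le> A * \<bar>g1 - g2\<bar> + B * \<bar>x1 - x2\<bar>"
    using assms by (intro add_mono mult_right_mono) auto
  finally show ?thesis .
qed

lemma lifted_vf_lipschitz:
  assumes R: "cube_norm u \<le> R" "cube_norm v \<le> R"
  shows "norm (lifted_vf a u - lifted_vf a v) \<le> lifted_lip a R * norm (u - v)"
proof -
  obtain x1 w1 y1 x2 w2 y2 where uv: "u = (x1, w1, y1)" "v = (x2, w2, y2)" by (cases u, cases v) auto
  have b: "\<bar>x1\<bar> \<le> R" "\<bar>w1\<bar> \<le> R" "\<bar>y1\<bar> \<le> R" "\<bar>x2\<bar> \<le> R" "\<bar>w2\<bar> \<le> R" "\<bar>y2\<bar> \<le> R"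
    using R by (auto simp: cube_norm_def uv)
  have R0: "0 \<le> R" using b by linarith
  define S where "S = \<bar>x1 - x2\<bar> + \<bar>w1 - w2\<bar> + \<bar>y1 - y2\<bar>"
  have S: "\<bar>x1 - x2\<bar> \<le> S" "\<bar>w1 - w2\<bar> \<le> S" "\<bar>y1 - y2\<bar> \<le> S" "\<bar>\<bar>y1\<bar> - \<bar>y2\<bar>\<bar> \<le> S"
    "S \<le> 3 * norm (u - v)"
    using abs_components_le_norm[of "u - v"] by (auto simp: S_def uv)
  define g1 g2 where "g1 = w1 / 2 - \<bar>y1\<bar>" and "g2 = w2 / 2 - \<bar>y2\<bar>"
  have g: "\<bar>g2\<bar> \<le> 2 * R" "\<bar>g1 - g2\<bar> \<le> S"
    using b unfolding g1_def g2_def S_def by (auto simp: abs_le_iff)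
  have c1: "\<bar>z1 * g1 - z2 * g2\<bar> \<le> 3 * R * S" if "\<bar>z1\<bar> \<le> R" "\<bar>z1 - z2\<bar> \<le> S" for z1 z2
  proof -
    have "\<bar>z1 * g1 - z2 * g2\<bar> \<le> R * \<bar>g1 - g2\<bar> + 2 * R * \<bar>z1 - z2\<bar>"
      by (rule abs_mult_diff_le[OF that(1) g(1)])
    also have "\<dots> \<le> R * S + 2 * R * S" using g(2) that(2) R0 by (intro add_mono mult_left_mono) auto
    finally show ?thesis by simp
  qed
  have c2: "\<bar>a * w1 * g1 - a * w2 * g2\<bar> \<le> \<bar>a\<bar> * (3 * R * S)"
    using c1[OF b(2) S(2)] by (simp add: abs_mult right_diff_distrib[symmetric] mult.assoc mult_left_mono)
  define q1 q2 h1 h2 where "q1 = y1 * \<bar>y1\<bar>" and "q2 = y2 * \<bar>y2\<bar>"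
    and "h1 = w1 - \<bar>y1\<bar>" and "h2 = w2 - \<bar>y2\<bar>"
  have q1: "\<bar>q1\<bar> \<le> R * R"
    using mult_mono[OF b(3) b(3)] R0 by (simp add: q1_def abs_mult)
  have h: "\<bar>h2\<bar> \<le> 2 * R" "\<bar>h1 - h2\<bar> \<le> S"
    using b unfolding h1_def h2_def S_def by (auto simp: abs_le_iff)
  have "\<bar>q1 - q2\<bar> \<le> R * \<bar>\<bar>y1\<bar> - \<bar>y2\<bar>\<bar> + R * \<bar>y1 - y2\<bar>"
    unfolding q1_def q2_def using b by (intro abs_mult_diff_le) auto
  also have "\<dots> \<le> R * S + R * S" using S R0 by (intro add_mono mult_left_mono) auto
  finally have q: "\<bar>q1 - q2\<bar> \<le> 2 * R * S" by simp
  have "\<bar>q1 * h1 - q2 * h2\<bar> \<le> (R * R) * \<bar>h1 - h2\<bar> + 2 * R * \<bar>q1 - q2\<bar>"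
    by (rule abs_mult_diff_le[OF q1 h(1)])
  also have "\<dots> \<le> (R * R) * S + 2 * R * (2 * R * S)" using h q R0 by (intro add_mono mult_left_mono) auto
  finally have c3: "\<bar>q1 * h1 - q2 * h2\<bar> \<le> 5 * R^2 * S" by (simp add: algebra_simps power2_eq_square)
  have "norm (lifted_vf a u - lifted_vf a v)
      \<le> \<bar>x1 * g1 - x2 * g2\<bar> + \<bar>a * w1 * g1 - a * w2 * g2\<bar> + \<bar>q1 * h1 - q2 * h2\<bar>"
    using norm_le_sum_abs_components[of "lifted_vf a u - lifted_vf a v"]
    by (simp add: lifted_vf_def uv g1_def g2_def q1_def q2_def h1_def h2_def mult.assoc)
  also have "\<dots> \<le> (3 * (1 + \<bar>a\<bar>) * R + 5 * R^2) * S"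
    using c1[OF b(1) S(1)] c2 c3 by (simp add: algebra_simps)
  also have "\<dots> \<le> (3 * (1 + \<bar>a\<bar>) * R + 5 * R^2) * (3 * norm (u - v))"
    using S(5) R0 by (intro mult_left_mono) auto
  also have "\<dots> = lifted_lip a R * norm (u - v)"
    by (simp add: lifted_lip_def algebra_simps)
  finally show ?thesis .
qed

lemma clamped_vf_lipschitz:
  assumes "0 \<le> R"
  shows "norm (clamped_vf a R u - clamped_vf a R v) \<le> lifted_lip a R * norm (u - v)"
proof -
  let ?c = "clamp (- R, - R, - R) (R, R, R)"
  have "norm (clamped_vf a R u - clamped_vf a R v) \<le> lifted_lip a R * norm (?c u - ?c v)"
    unfolding clamped_vf_def using assms by (intro lifted_vf_lipschitz cube_norm_clamp_le)
  also have "\<dots> \<le> lifted_lip a R * norm (u - v)"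
    using assms dist_clamps_le_dist_args[of "(- R, - R, - R)" "(R, R, R)" u v]
    by (intro mult_left_mono lifted_lip_nonneg) (auto simp: dist_norm)
  finally show ?thesis .
qed

lemma clamped_vf_eq: "cube_norm s \<le> R \<Longrightarrow> clamped_vf a R s = lifted_vf a s"
  by (simp add: clamped_vf_def cube_norm_le_iff_mem_cbox)

text \<open>The clamped field is globally Lipschitz, so this choice picks the unique global solution; it
  solves the lifted system as long as it stays in the cube of radius \<open>R\<close>.\<close>

definition clamped_flow :: "real \<Rightarrow> real \<Rightarrow> pt3 \<Rightarrow> real \<Rightarrow> pt3" where
  "clamped_flow a R q = (SOME \<gamma>. \<gamma> 0 = q \<and>
     (\<forall>t\<ge>0. (\<gamma> has_vector_derivative clamped_vf a R (\<gamma> t)) (at t within {0..})))"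

context
  fixes a R :: real
  assumes R: "0 \<le> R"
begin

lemma clamped_flow:
  "clamped_flow a R q 0 = q"
  "0 \<le> t \<Longrightarrow> (clamped_flow a R q has_vector_derivative clamped_vf a R (clamped_flow a R q t)) (at t within {0..})"
proof -
  have "\<exists>\<gamma>. \<gamma> 0 = q \<and> (\<forall>t\<ge>0. (\<gamma> has_vector_derivative clamped_vf a R (\<gamma> t)) (at t within {0..}))"
    by (rule lipschitz_ode_has_complete_solution[OF lifted_lip_nonneg[OF R] clamped_vf_lipschitz[OF R]])
  then have "clamped_flow a R q 0 = q \<and>
      (\<forall>t\<ge>0. (clamped_flow a R q has_vector_derivative clamped_vf a R (clamped_flow a R q t)) (at t within {0..}))"
    unfolding clamped_flow_def by (rule someI_ex)
  then show "clamped_flow a R q 0 = q"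
    "0 \<le> t \<Longrightarrow> (clamped_flow a R q has_vector_derivative clamped_vf a R (clamped_flow a R q t)) (at t within {0..})"
    by auto
qed

lemma clamped_flow_has_vector_derivative:
  "t \<in> {0..T} \<Longrightarrow>
    (clamped_flow a R q has_vector_derivative clamped_vf a R (clamped_flow a R q t)) (at t within {0..T})"
  using clamped_flow(2)[of t q] by (rule_tac has_vector_derivative_within_subset) auto

lemma continuous_on_clamped_flow: "continuous_on {0..T} (clamped_flow a R q)"
  using clamped_flow_has_vector_derivative
  by (meson continuous_on_eq_continuous_within has_vector_derivative_continuous)

lemma clamped_flow_dist_le:
  "0 \<le> t \<Longrightarrow> norm (clamped_flow a R q t - clamped_flow a R q' t) \<le> norm (q - q') * exp (lifted_lip a R * t)"
  using lipschitz_ode_solutions_dist_le[where S=UNIV and T=t and f="clamped_vf a R",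
      OF lifted_lip_nonneg[OF R] clamped_vf_lipschitz[OF R] clamped_flow_has_vector_derivative
      clamped_flow_has_vector_derivative]
  by (simp add: clamped_flow(1))

lemma clamped_flow_unique:
  assumes "\<And>t. t \<in> {0..T} \<Longrightarrow> (\<gamma> has_vector_derivative clamped_vf a R (\<gamma> t)) (at t within {0..T})"
    and "t \<in> {0..T}"
  shows "\<gamma> t = clamped_flow a R (\<gamma> 0) t"
  using lipschitz_ode_solutions_dist_le[where S=UNIV and T=T and f="clamped_vf a R",
      OF lifted_lip_nonneg[OF R] clamped_vf_lipschitz[OF R] assms(1)
      clamped_flow_has_vector_derivative[where q="\<gamma> 0"] _ _ assms(2)]
  by (simp add: clamped_flow(1))

end

section \<open>Solutions of the planar system\<close>

lemma fst_vf: "fst (vf a p) = fst p * ((1/2) * \<bar>fst p\<bar> powr a - \<bar>snd p\<bar>)"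
  and snd_vf: "snd (vf a p) = snd p * \<bar>snd p\<bar> * (\<bar>fst p\<bar> powr a - \<bar>snd p\<bar>)"
  by (simp_all add: vf_def Let_def)

lemma has_vector_derivative_fst:
  "(\<gamma> has_vector_derivative v) F \<Longrightarrow> ((\<lambda>t. fst (\<gamma> t)) has_vector_derivative fst v) F"
  unfolding has_vector_derivative_def by (auto dest: has_derivative_fst)

lemma has_vector_derivative_snd:
  "(\<gamma> has_vector_derivative v) F \<Longrightarrow> ((\<lambda>t. snd (\<gamma> t)) has_vector_derivative snd v) F"
  unfolding has_vector_derivative_def by (auto dest: has_derivative_snd)

lemma has_real_derivative_fst:
  "(\<gamma> has_vector_derivative v) F \<Longrightarrow> ((\<lambda>t. fst (\<gamma> t)) has_real_derivative fst v) F"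
  by (simp add: has_real_derivative_iff_has_vector_derivative has_vector_derivative_fst)

lemma has_real_derivative_snd:
  "(\<gamma> has_vector_derivative v) F \<Longrightarrow> ((\<lambda>t. snd (\<gamma> t)) has_real_derivative snd v) F"
  by (simp add: has_real_derivative_iff_has_vector_derivative has_vector_derivative_snd)

lemma abs_powr_has_real_derivative:
  fixes X :: "real \<Rightarrow> real"
  assumes deriv: "(X has_real_derivative X t * g) (at t within S)" and nz: "X t \<noteq> 0"
  shows "((\<lambda>s. \<bar>X s\<bar> powr a) has_real_derivative a * \<bar>X t\<bar> powr a * g) (at t within S)"
proof -
  have abs_powr: "\<bar>x\<bar> powr a = (x^2) powr (a/2)" for x :: real
  proof (cases "x = 0")
    case False
    then have "(x^2) powr (a/2) = (\<bar>x\<bar> powr 2) powr (a/2)"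
      using powr_realpow[of "\<bar>x\<bar>" 2] by simp
    then show ?thesis by (subst (asm) powr_powr) simp
  qed simp
  have pos: "0 < (X t)^2" using nz by simp
  have sq: "((\<lambda>s. (X s)^2) has_real_derivative 2 * (X t)^2 * g) (at t within S)"
    by (rule derivative_eq_intros deriv refl | simp add: power2_eq_square algebra_simps)+
  have "((\<lambda>s. ((X s)^2) powr (a/2)) has_real_derivative
      ((a/2) * ((X t)^2) powr (a/2 - 1)) * (2 * (X t)^2 * g)) (at t within S)"
    by (rule DERIV_chain2[OF has_real_derivative_powr[OF pos] sq])
  moreover have "((a/2) * ((X t)^2) powr (a/2 - 1)) * (2 * (X t)^2 * g) = a * (((X t)^2) powr (a/2)) * g"
  proof -
    have "((X t)^2) powr (a/2) = ((X t)^2) powr (a/2 - 1) * ((X t)^2) powr 1"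
      by (subst powr_add[symmetric]) simp
    then show ?thesis using pos by (simp add: powr_one algebra_simps)
  qed
  ultimately show ?thesis by (simp only: abs_powr)
qed

lemma sol_onD:
  assumes "sol_on F p T \<gamma>"
  shows "0 \<le> T" "\<gamma> 0 = p"
    "\<And>t. t \<in> {0..T} \<Longrightarrow> (\<gamma> has_vector_derivative F (\<gamma> t)) (at t within {0..T})"
  using assms by (auto simp: sol_on_def)

lemma continuous_on_sol: "sol_on F p T \<gamma> \<Longrightarrow> continuous_on {0..T} \<gamma>"
  by (meson sol_onD(3) continuous_on_eq_continuous_within has_vector_derivative_continuous)

lemma sol_on_restrict:
  assumes "sol_on F p T \<gamma>" and "0 \<le> T'" "T' \<le> T"
  shows "sol_on F p T' \<gamma>"
  unfolding sol_on_def
proof (intro conjI ballI)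
  fix t assume "t \<in> {0..T'}"
  with assms have "(\<gamma> has_vector_derivative F (\<gamma> t)) (at t within {0..T})"
    by (intro sol_onD(3)) auto
  then show "(\<gamma> has_vector_derivative F (\<gamma> t)) (at t within {0..T'})"
    by (rule has_vector_derivative_within_subset) (use assms in auto)
qed (use assms sol_onD(2) in auto)

lemma sol_on_shift:
  assumes sol: "sol_on F p T \<gamma>" and t1: "0 \<le> t1" "t1 \<le> T"
  shows "sol_on F (\<gamma> t1) (T - t1) (\<lambda>s. \<gamma> (t1 + s))"
  unfolding sol_on_def
proof (intro conjI ballI)
  fix s assume s: "s \<in> {0..T - t1}"
  have "(\<gamma> has_vector_derivative F (\<gamma> (t1 + s))) (at (t1 + s) within {0..T})"
    using s t1 by (intro sol_onD(3)[OF sol]) auto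
  then have "(\<gamma> has_vector_derivative F (\<gamma> (t1 + s))) (at (t1 + s) within (\<lambda>s. t1 + s) ` {0..T - t1})"
    by (rule has_vector_derivative_within_subset) (use t1 in auto)
  moreover have "((\<lambda>s. t1 + s) has_vector_derivative 1) (at s within {0..T - t1})"
    by (auto intro!: derivative_eq_intros)
  ultimately show "((\<lambda>s. \<gamma> (t1 + s)) has_vector_derivative F (\<gamma> (t1 + s))) (at s within {0..T - t1})"
    using vector_diff_chain_within by (fastforce simp: comp_def)
qed (use t1 in auto)

lemma complete_sol_imp_sol_on:
  assumes "complete_sol F p \<gamma>" and "0 \<le> T"
  shows "sol_on F p T \<gamma>"
  unfolding sol_on_def
proof (intro conjI ballI)
  fix t assume "t \<in> {0..T}"
  with assms(1) have "(\<gamma> has_vector_derivative F (\<gamma> t)) (at t within {0..})"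
    by (simp add: complete_sol_def)
  then show "(\<gamma> has_vector_derivative F (\<gamma> t)) (at t within {0..T})"
    by (rule has_vector_derivative_within_subset) auto
qed (use assms in \<open>auto simp: complete_sol_def\<close>)

lemma complete_sol_shift:
  assumes sol: "complete_sol F p \<gamma>" and t1: "0 \<le> t1"
  shows "complete_sol F (\<gamma> t1) (\<lambda>s. \<gamma> (t1 + s))"
  unfolding complete_sol_def
proof (intro conjI allI impI)
  fix s :: real assume s: "0 \<le> s"
  have "(\<gamma> has_vector_derivative F (\<gamma> (t1 + s))) (at (t1 + s) within {0..})"
    using sol s t1 by (simp add: complete_sol_def)
  then have "(\<gamma> has_vector_derivative F (\<gamma> (t1 + s))) (at (t1 + s) within (\<lambda>s. t1 + s) ` {0..})"
    by (rule has_vector_derivative_within_subset) (use t1 in auto)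
  moreover have "((\<lambda>s. t1 + s) has_vector_derivative 1) (at s within {0..})"
    by (auto intro!: derivative_eq_intros)
  ultimately show "((\<lambda>s. \<gamma> (t1 + s)) has_vector_derivative F (\<gamma> (t1 + s))) (at s within {0..})"
    using vector_diff_chain_within by (fastforce simp: comp_def)
qed simp

definition lift_pt :: "real \<Rightarrow> pt \<Rightarrow> pt3" where
  "lift_pt a p = (fst p, \<bar>fst p\<bar> powr a, snd p)"

definition proj_pt :: "pt3 \<Rightarrow> pt" where
  "proj_pt s = (fst s, snd (snd s))"

definition planar_flow :: "real \<Rightarrow> real \<Rightarrow> pt \<Rightarrow> real \<Rightarrow> pt" where
  "planar_flow a R p t = proj_pt (clamped_flow a R (lift_pt a p) t)"

lemma proj_lift_pt [simp]: "proj_pt (lift_pt a p) = p"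
  by (simp add: lift_pt_def proj_pt_def)

lemma proj_lifted_vf_lift_pt [simp]: "proj_pt (lifted_vf a (lift_pt a p)) = vf a p"
  by (simp add: proj_pt_def lifted_vf_def lift_pt_def vf_def Let_def)

lemma norm_proj_pt_diff_le: "norm (proj_pt u - proj_pt v) \<le> norm (u - v)"
  by (cases u, cases v) (simp add: proj_pt_def norm_Pair)

text \<open>The graph \<open>w = \<bar>x\<bar> powr a\<close> is invariant under the lifted flow, since \<open>x\<close> and
  \<open>w - \<bar>x\<bar> powr a\<close> satisfy linear equations.\<close>

lemma lifted_sol_eq_lift:
  assumes deriv: "\<And>s. s \<in> {0..T} \<Longrightarrow> (\<psi> has_vector_derivative lifted_vf a (\<psi> s)) (at s within {0..T})"
    and init: "\<psi> 0 = lift_pt a p" and t: "t \<in> {0..T}"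
  shows "\<psi> t = lift_pt a (proj_pt (\<psi> t))"
proof -
  define X W Y where "X s = fst (\<psi> s)" and "W s = fst (snd (\<psi> s))" and "Y s = snd (snd (\<psi> s))" for s
  define g where "g s = W s / 2 - \<bar>Y s\<bar>" for s
  have "continuous_on {0..T} \<psi>"
    using deriv by (meson continuous_on_eq_continuous_within has_vector_derivative_continuous)
  then have cont_g: "continuous_on {0..T} g"
    unfolding g_def W_def Y_def by (auto intro!: continuous_intros)
  then have cont_ag: "continuous_on {0..T} (\<lambda>s. a * g s)"
    by (intro continuous_intros)
  have dX: "(X has_real_derivative X s * g s) (at s within {0..T})" if "s \<in> {0..T}" for s
    using has_real_derivative_fst[OF deriv[OF that]]
    by (simp add: X_def[abs_def] g_def W_def Y_def lifted_vf_def Let_def)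
  have dW: "(W has_real_derivative W s * (a * g s)) (at s within {0..T})" if "s \<in> {0..T}" for s
    using has_real_derivative_fst[OF has_vector_derivative_snd[OF deriv[OF that]]]
    by (simp add: W_def[abs_def] g_def Y_def lifted_vf_def Let_def algebra_simps)
  have "W t = \<bar>X t\<bar> powr a"
  proof (cases "fst p = 0")
    case True
    then have "X 0 = 0" "W 0 = 0" using init by (auto simp: X_def W_def lift_pt_def)
    then show ?thesis
      using linear_scalar_ode_zero_iff[OF dW cont_ag t] linear_scalar_ode_zero_iff[OF dX cont_g t] by simp
  next
    case False
    have X_nz: "X s \<noteq> 0" if "s \<in> {0..T}" for s
      using linear_scalar_ode_zero_iff[OF dX cont_g that] init False by (auto simp: X_def lift_pt_def)
    define u where "u s = W s - \<bar>X s\<bar> powr a" for s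
    have "(u has_real_derivative u s * (a * g s)) (at s within {0..T})" if s: "s \<in> {0..T}" for s
      unfolding u_def[abs_def]
      by (rule derivative_eq_intros dW[OF s] abs_powr_has_real_derivative[OF dX[OF s] X_nz[OF s]] refl
          | simp add: algebra_simps)+
    moreover have "u 0 = 0" using init by (simp add: u_def X_def W_def lift_pt_def)
    ultimately have "u t = 0" using linear_scalar_ode_zero_iff[OF _ cont_ag t] by blast
    then show ?thesis by (simp add: u_def)
  qed
  then show ?thesis by (simp add: X_def W_def lift_pt_def proj_pt_def prod_eq_iff)
qed

locale planar_system =
  fixes a :: real
  assumes a_pos: "0 < a"
begin

lemma continuous_on_abs_powr:
  "continuous_on S f \<Longrightarrow> continuous_on S (\<lambda>t. \<bar>f t\<bar> powr a)"
  using a_pos by (intro continuous_on_powr'[OF continuous_on_rabs continuous_on_const]) auto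

lemma continuous_lift_pt: "continuous_on S (lift_pt a)"
  unfolding lift_pt_def by (intro continuous_on_abs_powr continuous_intros)

text \<open>Each coordinate of a solution obeys a scalar linear equation, so it vanishes everywhere or nowhere.\<close>

lemma sol_coordinate_eq_0_iff:
  assumes sol: "sol_on (vf a) p T \<gamma>" and t: "t \<in> {0..T}"
  shows "fst (\<gamma> t) = 0 \<longleftrightarrow> fst p = 0" "snd (\<gamma> t) = 0 \<longleftrightarrow> snd p = 0"
proof -
  have cont: "continuous_on {0..T} (\<lambda>s. fst (\<gamma> s))" "continuous_on {0..T} (\<lambda>s. snd (\<gamma> s))"
    using continuous_on_sol[OF sol] by (auto intro: continuous_intros)
  have dx: "((\<lambda>s. fst (\<gamma> s)) has_real_derivative fst (\<gamma> s) * ((1/2) * \<bar>fst (\<gamma> s)\<bar> powr a - \<bar>snd (\<gamma> s)\<bar>))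
      (at s within {0..T})" if "s \<in> {0..T}" for s
    using has_real_derivative_fst[OF sol_onD(3)[OF sol that]] by (simp add: fst_vf)
  moreover have "continuous_on {0..T} (\<lambda>s. (1/2) * \<bar>fst (\<gamma> s)\<bar> powr a - \<bar>snd (\<gamma> s)\<bar>)"
    using continuous_on_sol[OF sol] by (intro continuous_on_abs_powr continuous_intros)
  ultimately show "fst (\<gamma> t) = 0 \<longleftrightarrow> fst p = 0"
    using linear_scalar_ode_zero_iff[OF dx _ t] sol_onD(2)[OF sol] by simp
  have dy: "((\<lambda>s. snd (\<gamma> s)) has_real_derivative snd (\<gamma> s) * (\<bar>snd (\<gamma> s)\<bar> * (\<bar>fst (\<gamma> s)\<bar> powr a - \<bar>snd (\<gamma> s)\<bar>)))
      (at s within {0..T})" if "s \<in> {0..T}" for s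
    using has_real_derivative_snd[OF sol_onD(3)[OF sol that]] by (simp add: snd_vf mult.assoc)
  moreover have "continuous_on {0..T} (\<lambda>s. \<bar>snd (\<gamma> s)\<bar> * (\<bar>fst (\<gamma> s)\<bar> powr a - \<bar>snd (\<gamma> s)\<bar>))"
    using continuous_on_sol[OF sol] by (intro continuous_on_abs_powr continuous_intros)
  ultimately show "snd (\<gamma> t) = 0 \<longleftrightarrow> snd p = 0"
    using linear_scalar_ode_zero_iff[OF dy _ t] sol_onD(2)[OF sol] by simp
qed

lemma sol_eq_0_iff:
  assumes "sol_on (vf a) p T \<gamma>" and "t \<in> {0..T}"
  shows "\<gamma> t = 0 \<longleftrightarrow> p = 0"
  using sol_coordinate_eq_0_iff[OF assms] by (simp add: prod_eq_iff)

lemma sol_has_real_derivatives: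
  assumes sol: "sol_on (vf a) p T \<gamma>" and t: "t \<in> {0..T}"
  defines "x \<equiv> \<lambda>s. fst (\<gamma> s)" and "y \<equiv> \<lambda>s. snd (\<gamma> s)"
  shows "(x has_real_derivative x t * ((1/2) * \<bar>x t\<bar> powr a - \<bar>y t\<bar>)) (at t within {0..T})"
    and "(y has_real_derivative y t * \<bar>y t\<bar> * (\<bar>x t\<bar> powr a - \<bar>y t\<bar>)) (at t within {0..T})"
    and "((\<lambda>s. \<bar>x s\<bar> powr a) has_real_derivative a * \<bar>x t\<bar> powr a * ((1/2) * \<bar>x t\<bar> powr a - \<bar>y t\<bar>))
      (at t within {0..T})"
    and "((\<lambda>s. (x s)^2) has_real_derivative 2 * (x t)^2 * ((1/2) * \<bar>x t\<bar> powr a - \<bar>y t\<bar>))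
      (at t within {0..T})"
    and "y t \<noteq> 0 \<Longrightarrow>
      ((\<lambda>s. \<bar>y s\<bar>) has_real_derivative \<bar>y t\<bar> * \<bar>y t\<bar> * (\<bar>x t\<bar> powr a - \<bar>y t\<bar>)) (at t within {0..T})"
proof -
  show dx: "(x has_real_derivative x t * ((1/2) * \<bar>x t\<bar> powr a - \<bar>y t\<bar>)) (at t within {0..T})"
    using has_real_derivative_fst[OF sol_onD(3)[OF sol t]] by (simp add: fst_vf x_def y_def)
  show dy: "(y has_real_derivative y t * \<bar>y t\<bar> * (\<bar>x t\<bar> powr a - \<bar>y t\<bar>)) (at t within {0..T})"
    using has_real_derivative_snd[OF sol_onD(3)[OF sol t]] by (simp add: snd_vf x_def y_def)
  show "((\<lambda>s. \<bar>x s\<bar> powr a) has_real_derivative a * \<bar>x t\<bar> powr a * ((1/2) * \<bar>x t\<bar> powr a - \<bar>y t\<bar>))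
      (at t within {0..T})"
  proof (cases "fst p = 0")
    case True
    then have "x s = 0" if "s \<in> {0..T}" for s
      using sol_coordinate_eq_0_iff(1)[OF sol that] by (simp add: x_def)
    then have "((\<lambda>s. \<bar>x s\<bar> powr a) has_real_derivative 0) (at t within {0..T})"
      by (intro has_field_derivative_transform_within[where d=1 and f="\<lambda>_. 0", OF DERIV_const])
        (use t in auto)
    then show ?thesis using \<open>\<And>s. s \<in> {0..T} \<Longrightarrow> x s = 0\<close>[OF t] by simp
  next
    case False
    then have "x t \<noteq> 0" using sol_coordinate_eq_0_iff(1)[OF sol t] by (simp add: x_def)
    then show ?thesis by (rule abs_powr_has_real_derivative[OF dx])
  qed
  show "((\<lambda>s. (x s)^2) has_real_derivative 2 * (x t)^2 * ((1/2) * \<bar>x t\<bar> powr a - \<bar>y t\<bar>))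
      (at t within {0..T})"
    by (rule derivative_eq_intros dx refl | simp add: power2_eq_square algebra_simps)+
  show "((\<lambda>s. \<bar>y s\<bar>) has_real_derivative \<bar>y t\<bar> * \<bar>y t\<bar> * (\<bar>x t\<bar> powr a - \<bar>y t\<bar>)) (at t within {0..T})"
    if "y t \<noteq> 0"
  proof -
    have "(y has_real_derivative y t * (\<bar>y t\<bar> * (\<bar>x t\<bar> powr a - \<bar>y t\<bar>))) (at t within {0..T})"
      using dy by (simp add: mult.assoc)
    from abs_powr_has_real_derivative[OF this that, of 1] show ?thesis
      by (simp only: powr_one abs_ge_zero mult_1 mult.assoc)
  qed
qed

lemma lift_sol_has_vector_derivative:
  assumes sol: "sol_on (vf a) p T \<gamma>" and t: "t \<in> {0..T}"
  shows "((\<lambda>s. lift_pt a (\<gamma> s)) has_vector_derivative lifted_vf a (lift_pt a (\<gamma> t))) (at t within {0..T})"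
  using has_vector_derivative_Pair[OF sol_has_real_derivatives(1)[OF sol t, unfolded has_real_derivative_iff_has_vector_derivative]
      has_vector_derivative_Pair[OF sol_has_real_derivatives(3)[OF sol t, unfolded has_real_derivative_iff_has_vector_derivative]
        sol_has_real_derivatives(2)[OF sol t, unfolded has_real_derivative_iff_has_vector_derivative]]]
  by (simp add: lift_pt_def lifted_vf_def Let_def algebra_simps)

lemma sol_lift_bounded: "sol_on (vf a) p T \<gamma> \<Longrightarrow> \<exists>R\<ge>0. \<forall>t\<in>{0..T}. cube_norm (lift_pt a (\<gamma> t)) \<le> R"
proof -
  assume sol: "sol_on (vf a) p T \<gamma>"
  have "compact ((\<lambda>t. cube_norm (lift_pt a (\<gamma> t))) ` {0..T})"
    by (intro compact_continuous_image continuous_intros continuous_on_compose2[OF continuous_lift_pt]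
        continuous_on_sol[OF sol]) auto
  then obtain R where "\<forall>t\<in>{0..T}. \<bar>cube_norm (lift_pt a (\<gamma> t))\<bar> \<le> R"
    by (force dest: compact_imp_bounded simp: bounded_iff)
  then show ?thesis by (intro exI[of _ "max R 0"]) auto
qed

lemma sol_eq_clamped_flow:
  assumes sol: "sol_on (vf a) p T \<gamma>" and R: "0 \<le> R"
    and bounded: "\<And>t. t \<in> {0..T} \<Longrightarrow> cube_norm (lift_pt a (\<gamma> t)) \<le> R" and t: "t \<in> {0..T}"
  shows "lift_pt a (\<gamma> t) = clamped_flow a R (lift_pt a p) t"
  using clamped_flow_unique[OF R, where \<gamma>="\<lambda>s. lift_pt a (\<gamma> s)", OF _ t]
    lift_sol_has_vector_derivative[OF sol] bounded clamped_vf_eq sol_onD(2)[OF sol]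
  by simp

lemma sol_unique:
  assumes "sol_on (vf a) p T \<gamma>1" "sol_on (vf a) p T \<gamma>2" and t: "t \<in> {0..T}"
  shows "\<gamma>1 t = \<gamma>2 t"
proof -
  obtain R1 R2 where "R1 \<ge> 0" "\<forall>t\<in>{0..T}. cube_norm (lift_pt a (\<gamma>1 t)) \<le> R1"
    "R2 \<ge> 0" "\<forall>t\<in>{0..T}. cube_norm (lift_pt a (\<gamma>2 t)) \<le> R2"
    using sol_lift_bounded assms by metis
  then have "lift_pt a (\<gamma>1 t) = clamped_flow a (max R1 R2) (lift_pt a p) t"
    "lift_pt a (\<gamma>2 t) = clamped_flow a (max R1 R2) (lift_pt a p) t"
    by (auto intro!: sol_eq_clamped_flow[OF assms(1) _ _ t] sol_eq_clamped_flow[OF assms(2) _ _ t]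
        simp: le_max_iff_disj)
  then have "lift_pt a (\<gamma>1 t) = lift_pt a (\<gamma>2 t)" by simp
  then show ?thesis by (metis proj_lift_pt)
qed

lemma clamped_flow_eq_lift:
  assumes R: "0 \<le> R"
    and bounded: "\<And>t. t \<in> {0..T} \<Longrightarrow> cube_norm (clamped_flow a R (lift_pt a p) t) \<le> R"
    and t: "t \<in> {0..T}"
  shows "clamped_flow a R (lift_pt a p) t = lift_pt a (planar_flow a R p t)"
  unfolding planar_flow_def
proof (rule lifted_sol_eq_lift[where \<psi>="clamped_flow a R (lift_pt a p)", OF _ clamped_flow(1)[OF R] t])
  fix s assume s: "s \<in> {0..T}"
  show "(clamped_flow a R (lift_pt a p) has_vector_derivative
      lifted_vf a (clamped_flow a R (lift_pt a p) s)) (at s within {0..T})"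
    using clamped_flow_has_vector_derivative[OF R s, where a=a and q="lift_pt a p"]
      clamped_vf_eq[OF bounded[OF s], where a=a] by simp
qed

lemma planar_flow_sol_on:
  assumes R: "0 \<le> R" and T: "0 \<le> T"
    and bounded: "\<And>t. t \<in> {0..T} \<Longrightarrow> cube_norm (clamped_flow a R (lift_pt a p) t) \<le> R"
  shows "sol_on (vf a) p T (planar_flow a R p)"
  unfolding sol_on_def
proof (intro conjI ballI)
  show "planar_flow a R p 0 = p" using clamped_flow(1)[OF R] by (simp add: planar_flow_def)
  fix t assume t: "t \<in> {0..T}"
  have "(planar_flow a R p has_vector_derivative proj_pt (lifted_vf a (clamped_flow a R (lift_pt a p) t)))
      (at t within {0..T})"
    using clamped_flow_has_vector_derivative[OF R t, where a=a and q="lift_pt a p"]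
      clamped_vf_eq[OF bounded[OF t], where a=a]
    unfolding planar_flow_def[abs_def] proj_pt_def
    by (auto intro!: has_vector_derivative_Pair has_vector_derivative_fst has_vector_derivative_snd)
  then show "(planar_flow a R p has_vector_derivative vf a (planar_flow a R p t)) (at t within {0..T})"
    using clamped_flow_eq_lift[OF R bounded t] by simp
qed (use T in auto)

end

section \<open>The region where \<open>y\<close> dominates\<close>

lemma omega_limit_subset_of_tendsto:
  assumes "(\<gamma> \<longlongrightarrow> l) at_top"
  shows "omega_limit \<gamma> \<subseteq> {l}"
proof
  fix q assume "q \<in> omega_limit \<gamma>"
  then obtain s :: "nat \<Rightarrow> real" where s: "filterlim s at_top sequentially" "(\<gamma> \<circ> s) \<longlonglongrightarrow> q"
    by (auto simp: omega_limit_def)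
  have "(\<gamma> \<circ> s) \<longlonglongrightarrow> l" unfolding comp_def by (rule filterlim_compose[OF assms s(1)])
  with s(2) show "q \<in> {l}" by (simp add: LIMSEQ_unique)
qed

definition y_dominant :: "real \<Rightarrow> pt \<Rightarrow> bool" where
  "y_dominant a p \<longleftrightarrow> (1/2) * \<bar>fst p\<bar> powr a < \<bar>snd p\<bar>"

text \<open>A ratio \<open>c \<in> (1/2, 1)\<close> with \<open>c \<bar>x\<bar> powr a < \<bar>y\<bar>\<close> at \<open>p\<close>; this strict inequality is preserved
  along the solution from \<open>p\<close>, and \<open>c > 1/2\<close> forces \<open>\<bar>x\<bar>\<close> to decrease at a definite rate.\<close>

definition dominance_ratio :: "real \<Rightarrow> pt \<Rightarrow> real" where
  "dominance_ratio a p = (if \<bar>fst p\<bar> powr a = 0 then 3/4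
     else min (3/4) ((1/2 + \<bar>snd p\<bar> / \<bar>fst p\<bar> powr a) / 2))"

definition orbit_bound :: "real \<Rightarrow> pt \<Rightarrow> real" where
  "orbit_bound a p = \<bar>fst p\<bar> + \<bar>snd p\<bar> + \<bar>fst p\<bar> powr a"

lemma orbit_bound_ge:
  "\<bar>fst p\<bar> \<le> orbit_bound a p" "\<bar>snd p\<bar> \<le> orbit_bound a p" "\<bar>fst p\<bar> powr a \<le> orbit_bound a p"
  unfolding orbit_bound_def using abs_ge_zero[of "fst p"] abs_ge_zero[of "snd p"] powr_ge_zero[of "\<bar>fst p\<bar>" a]
  by linarith+

lemma dominance_ratio:
  assumes "y_dominant a p"
  shows "1/2 < dominance_ratio a p" "dominance_ratio a p < 1"
    "dominance_ratio a p * \<bar>fst p\<bar> powr a < \<bar>snd p\<bar>"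
proof -
  define m where "m = \<bar>fst p\<bar> powr a"
  have dom: "(1/2) * m < \<bar>snd p\<bar>" using assms by (simp add: y_dominant_def m_def)
  show "1/2 < dominance_ratio a p"
  proof (cases "m = 0")
    case False
    then have "0 < m" by (simp add: m_def)
    define r where "r = \<bar>snd p\<bar> / m"
    have "1/2 < r" using dom \<open>0 < m\<close> by (simp add: r_def field_simps)
    then have "1/2 < min (3/4) ((1/2 + r) / 2)" by simp
    then show ?thesis
      using False unfolding dominance_ratio_def m_def[symmetric] r_def[symmetric] by simp
  qed (simp add: dominance_ratio_def m_def[symmetric])
  show "dominance_ratio a p < 1" by (simp add: dominance_ratio_def min_less_iff_disj)
  show "dominance_ratio a p * \<bar>fst p\<bar> powr a < \<bar>snd p\<bar>"
  proof (cases "m = 0")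
    case False
    then have m: "0 < m" by (simp add: m_def)
    have "dominance_ratio a p = min (3/4) ((1/2 + \<bar>snd p\<bar> / m) / 2)"
      using False by (simp add: dominance_ratio_def m_def[symmetric])
    also have "\<dots> \<le> (1/2 + \<bar>snd p\<bar> / m) / 2" by (rule min.cobounded2)
    also have "\<dots> < \<bar>snd p\<bar> / m" using dom m by (simp add: field_simps)
    finally have "dominance_ratio a p < \<bar>snd p\<bar> / m" .
    then have "dominance_ratio a p * m < \<bar>snd p\<bar> / m * m" using m by (rule mult_strict_right_mono)
    then show ?thesis using m by (simp add: m_def[symmetric])
  qed (use dom in \<open>simp add: dominance_ratio_def m_def[symmetric]\<close>)
qed

lemma y_dominant_snd_nonzero: "y_dominant a p \<Longrightarrow> snd p \<noteq> 0"
  by (auto simp: y_dominant_def)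

context planar_system
begin

lemma open_y_dominant_bounded: "open {p. y_dominant a p \<and> orbit_bound a p < \<delta>}"
  unfolding y_dominant_def orbit_bound_def
  by (intro open_Collect_conj open_Collect_less continuous_on_abs_powr continuous_intros)

lemma y_dominant_invariant:
  assumes sol: "sol_on (vf a) p T \<gamma>" and dom: "y_dominant a p" and t: "t \<in> {0..T}"
  shows "dominance_ratio a p * \<bar>fst (\<gamma> t)\<bar> powr a < \<bar>snd (\<gamma> t)\<bar>"
proof -
  define c where "c = dominance_ratio a p"
  have c: "1/2 < c" "c < 1" "c * \<bar>fst p\<bar> powr a < \<bar>snd p\<bar>"
    using dominance_ratio[OF dom] by (auto simp: c_def)
  have y_nz: "snd (\<gamma> s) \<noteq> 0" if "s \<in> {0..T}" for s
    using sol_coordinate_eq_0_iff(2)[OF sol that] y_dominant_snd_nonzero[OF dom] by simp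
  define m v where "m s = \<bar>fst (\<gamma> s)\<bar> powr a" and "v s = \<bar>snd (\<gamma> s)\<bar>" for s
  define h where "h s = c * m s - v s" for s
  define h' where "h' s = c * (a * m s * ((1/2) * m s - v s)) - v s * v s * (m s - v s)" for s
  have "h t < 0"
  proof (rule negative_barrier[OF _ _ _ t])
    fix s assume s: "s \<in> {0..T}"
    show "(h has_real_derivative h' s) (at s within {0..T})"
      unfolding h_def[abs_def] h'_def m_def v_def
      by (intro DERIV_diff DERIV_cmult sol_has_real_derivatives(3,5)[OF sol s] y_nz[OF s])
  next
    show "h 0 < 0" using c(3) sol_onD(2)[OF sol] by (simp add: h_def m_def v_def)
  next
    fix s assume s: "s \<in> {0..T}" "0 < s" "h s = 0" "\<forall>u\<in>{0..<s}. h u < 0"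
    have v: "v s = c * m s" using s(3) by (simp add: h_def)
    have "0 < v s" using y_nz[OF s(1)] by (simp add: v_def)
    then have m: "0 < m s" using v c by (simp add: zero_less_mult_iff)
    have "h' s = c * (m s)^2 * (a * (1/2 - c) - c * (1 - c) * m s)"
      unfolding h'_def v by (simp add: algebra_simps power2_eq_square)
    moreover have "a * (1/2 - c) - c * (1 - c) * m s < 0"
    proof -
      have "a * (1/2 - c) < 0" using a_pos c by (simp add: mult_pos_neg)
      moreover have "0 < c * (1 - c) * m s" using c m by simp
      ultimately show ?thesis by linarith
    qed
    ultimately show "h' s < 0" using c m by (simp add: mult_pos_neg)
  qed
  then show ?thesis by (simp add: h_def m_def v_def c_def)
qed

lemma y_dominant_fst_sq_antimono:
  assumes sol: "sol_on (vf a) p T \<gamma>" and dom: "y_dominant a p" and st: "t0 \<le> t1" "t1 \<le> T" "0 \<le> t0"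
  shows "(fst (\<gamma> t1))^2 \<le> (fst (\<gamma> t0))^2"
proof (rule has_real_derivative_nonpos_imp_antimono[OF sol_has_real_derivatives(4)[OF sol]])
  fix t assume t: "t \<in> {0..T}"
  have "(1/2) * \<bar>fst (\<gamma> t)\<bar> powr a \<le> dominance_ratio a p * \<bar>fst (\<gamma> t)\<bar> powr a"
    using dominance_ratio(1)[OF dom] by (intro mult_right_mono) auto
  then have "(1/2) * \<bar>fst (\<gamma> t)\<bar> powr a - \<bar>snd (\<gamma> t)\<bar> \<le> 0"
    using y_dominant_invariant[OF sol dom t] by linarith
  then show "2 * (fst (\<gamma> t))^2 * ((1/2) * \<bar>fst (\<gamma> t)\<bar> powr a - \<bar>snd (\<gamma> t)\<bar>) \<le> 0"
    by (simp add: mult_nonneg_nonpos)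
qed (use st in auto)

lemma y_dominant_abs_fst_le:
  assumes sol: "sol_on (vf a) p T \<gamma>" and dom: "y_dominant a p" and t: "t \<in> {0..T}"
  shows "\<bar>fst (\<gamma> t)\<bar> \<le> \<bar>fst p\<bar>"
  using y_dominant_fst_sq_antimono[OF sol dom, of 0 t] t sol_onD(2)[OF sol]
  by (simp add: abs_le_square_iff)

lemma abs_snd_barrier:
  assumes sol: "sol_on (vf a) p T \<gamma>" and y0: "snd p \<noteq> 0" and t0: "t0 \<in> {0..T}"
    and start: "\<bar>snd (\<gamma> t0)\<bar> < B" and small: "\<And>t. t \<in> {t0..T} \<Longrightarrow> \<bar>fst (\<gamma> t)\<bar> powr a < B"
    and t: "t \<in> {t0..T}"
  shows "\<bar>snd (\<gamma> t)\<bar> < B"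
proof -
  have y_nz: "snd (\<gamma> s) \<noteq> 0" if "s \<in> {0..T}" for s
    using sol_coordinate_eq_0_iff(2)[OF sol that] y0 by simp
  have "\<bar>snd (\<gamma> t)\<bar> - B < 0"
  proof (rule negative_barrier[where h="\<lambda>s. \<bar>snd (\<gamma> s)\<bar> - B", OF _ _ _ t])
    fix s assume s: "s \<in> {t0..T}"
    then have "((\<lambda>s. \<bar>snd (\<gamma> s)\<bar>) has_real_derivative
        \<bar>snd (\<gamma> s)\<bar> * \<bar>snd (\<gamma> s)\<bar> * (\<bar>fst (\<gamma> s)\<bar> powr a - \<bar>snd (\<gamma> s)\<bar>)) (at s within {t0..T})"
      using t0 by (intro DERIV_subset[OF sol_has_real_derivatives(5)[OF sol _ y_nz]]) auto
    from DERIV_diff[OF this DERIV_const[of B]]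
    show "((\<lambda>s. \<bar>snd (\<gamma> s)\<bar> - B) has_real_derivative
        \<bar>snd (\<gamma> s)\<bar> * \<bar>snd (\<gamma> s)\<bar> * (\<bar>fst (\<gamma> s)\<bar> powr a - \<bar>snd (\<gamma> s)\<bar>)) (at s within {t0..T})"
      by simp
  next
    fix s assume s: "s \<in> {t0..T}" "t0 < s" "\<bar>snd (\<gamma> s)\<bar> - B = 0" "\<forall>u\<in>{t0..<s}. \<bar>snd (\<gamma> u)\<bar> - B < 0"
    then have "\<bar>fst (\<gamma> s)\<bar> powr a - \<bar>snd (\<gamma> s)\<bar> < 0" "0 < \<bar>snd (\<gamma> s)\<bar>"
      using small[OF s(1)] start by auto
    then show "\<bar>snd (\<gamma> s)\<bar> * \<bar>snd (\<gamma> s)\<bar> * (\<bar>fst (\<gamma> s)\<bar> powr a - \<bar>snd (\<gamma> s)\<bar>) < 0"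
      by (intro mult_pos_neg mult_pos_pos)
  qed (use start in auto)
  then show ?thesis by simp
qed

lemma y_dominant_abs_snd_le:
  assumes sol: "sol_on (vf a) p T \<gamma>" and dom: "y_dominant a p" and t: "t \<in> {0..T}"
  shows "\<bar>snd (\<gamma> t)\<bar> \<le> max \<bar>snd p\<bar> (\<bar>fst p\<bar> powr a)"
proof (rule ccontr)
  define B where "B = max \<bar>snd p\<bar> (\<bar>fst p\<bar> powr a)"
  assume "\<not> \<bar>snd (\<gamma> t)\<bar> \<le> max \<bar>snd p\<bar> (\<bar>fst p\<bar> powr a)"
  then have B: "B < \<bar>snd (\<gamma> t)\<bar>" unfolding B_def by linarith
  have "\<bar>snd (\<gamma> t)\<bar> < (B + \<bar>snd (\<gamma> t)\<bar>) / 2"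
  proof (rule abs_snd_barrier[OF sol y_dominant_snd_nonzero[OF dom], of 0])
    fix u assume "u \<in> {0..T}"
    then have "\<bar>fst (\<gamma> u)\<bar> powr a \<le> \<bar>fst p\<bar> powr a"
      using y_dominant_abs_fst_le[OF sol dom] a_pos by (intro powr_mono2) auto
    moreover have "\<bar>fst p\<bar> powr a \<le> B" by (simp add: B_def)
    ultimately show "\<bar>fst (\<gamma> u)\<bar> powr a < (B + \<bar>snd (\<gamma> t)\<bar>) / 2" using B by (simp add: field_simps)
  next
    have "\<bar>snd p\<bar> \<le> B" by (simp add: B_def)
    then show "\<bar>snd (\<gamma> 0)\<bar> < (B + \<bar>snd (\<gamma> t)\<bar>) / 2" using B sol_onD(2)[OF sol] by simp
  qed (use t in auto)
  with B show False by simp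
qed

lemma y_dominant_bounds:
  assumes sol: "sol_on (vf a) p T \<gamma>" and dom: "y_dominant a p" and t: "t \<in> {0..T}"
  shows "norm (\<gamma> t) \<le> orbit_bound a p" "cube_norm (lift_pt a (\<gamma> t)) \<le> orbit_bound a p"
proof -
  have x: "\<bar>fst (\<gamma> t)\<bar> \<le> \<bar>fst p\<bar>" by (rule y_dominant_abs_fst_le[OF sol dom t])
  then have "\<bar>fst (\<gamma> t)\<bar> powr a \<le> \<bar>fst p\<bar> powr a" using a_pos by (intro powr_mono2) auto
  moreover have "\<bar>snd (\<gamma> t)\<bar> \<le> max \<bar>snd p\<bar> (\<bar>fst p\<bar> powr a)" by (rule y_dominant_abs_snd_le[OF sol dom t])
  moreover have "max \<bar>snd p\<bar> (\<bar>fst p\<bar> powr a) \<le> \<bar>snd p\<bar> + \<bar>fst p\<bar> powr a" by simp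
  ultimately have "\<bar>fst (\<gamma> t)\<bar> \<le> orbit_bound a p" "\<bar>fst (\<gamma> t)\<bar> powr a \<le> orbit_bound a p"
    "\<bar>snd (\<gamma> t)\<bar> \<le> orbit_bound a p" "\<bar>fst (\<gamma> t)\<bar> + \<bar>snd (\<gamma> t)\<bar> \<le> orbit_bound a p"
    using x orbit_bound_ge[of p a] abs_ge_zero[of "fst (\<gamma> t)"] unfolding orbit_bound_def by linarith+
  moreover have "norm (\<gamma> t) \<le> \<bar>fst (\<gamma> t)\<bar> + \<bar>snd (\<gamma> t)\<bar>"
    using norm_Pair_le[of "fst (\<gamma> t)" "snd (\<gamma> t)"] by simp
  ultimately show "norm (\<gamma> t) \<le> orbit_bound a p" "cube_norm (lift_pt a (\<gamma> t)) \<le> orbit_bound a p"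
    by (auto simp: cube_norm_def lift_pt_def)
qed

text \<open>While \<open>\<bar>x\<bar> \<ge> \<epsilon>\<close>, the invariant gives \<open>(x\<^sup>2)' \<le> -2 (c - 1/2) \<epsilon>\<^sup>2 \<epsilon> powr a\<close>.\<close>

lemma y_dominant_fst_eventually_small:
  assumes sol: "complete_sol (vf a) p \<gamma>" and dom: "y_dominant a p" and e: "0 < \<epsilon>"
  shows "\<exists>t\<ge>0. \<bar>fst (\<gamma> t)\<bar> < \<epsilon>"
proof (rule ccontr)
  assume "\<not> (\<exists>t\<ge>0. \<bar>fst (\<gamma> t)\<bar> < \<epsilon>)"
  then have big: "\<And>t. 0 \<le> t \<Longrightarrow> \<epsilon> \<le> \<bar>fst (\<gamma> t)\<bar>" by force
  define c where "c = dominance_ratio a p"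
  have c: "1/2 < c" using dominance_ratio(1)[OF dom] by (simp add: c_def)
  define k where "k = 2 * (c - 1/2) * \<epsilon>^2 * \<epsilon> powr a"
  have k: "0 < k" using c e by (simp add: k_def)
  define T where "T = (fst p)^2 / k + 1"
  have T: "0 \<le> T" using k by (simp add: T_def)
  have sol_T: "sol_on (vf a) p T \<gamma>" by (rule complete_sol_imp_sol_on[OF sol T])
  have "(fst (\<gamma> T))^2 + k * T \<le> (fst (\<gamma> 0))^2 + k * 0"
  proof (rule has_real_derivative_nonpos_imp_antimono[where f="\<lambda>t. (fst (\<gamma> t))^2 + k * t"])
    fix t assume t: "t \<in> {0..T}"
    show "((\<lambda>t. (fst (\<gamma> t))^2 + k * t) has_real_derivative
        2 * (fst (\<gamma> t))^2 * ((1/2) * \<bar>fst (\<gamma> t)\<bar> powr a - \<bar>snd (\<gamma> t)\<bar>) + k) (at t within {0..T})"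
      by (rule derivative_eq_intros sol_has_real_derivatives(4)[OF sol_T t] refl | simp)+
    have "\<epsilon>^2 * \<epsilon> powr a \<le> (fst (\<gamma> t))^2 * \<bar>fst (\<gamma> t)\<bar> powr a"
      using big[of t] t e a_pos
      by (intro mult_mono powr_mono2) (auto simp: abs_le_square_iff[symmetric])
    then have "k \<le> 2 * (c - 1/2) * ((fst (\<gamma> t))^2 * \<bar>fst (\<gamma> t)\<bar> powr a)"
      unfolding k_def using c by (simp add: mult.assoc)
    moreover have "(1/2) * \<bar>fst (\<gamma> t)\<bar> powr a - \<bar>snd (\<gamma> t)\<bar> \<le> (1/2 - c) * \<bar>fst (\<gamma> t)\<bar> powr a"
      using y_dominant_invariant[OF sol_T dom t] by (simp add: c_def algebra_simps)
    then have "2 * (fst (\<gamma> t))^2 * ((1/2) * \<bar>fst (\<gamma> t)\<bar> powr a - \<bar>snd (\<gamma> t)\<bar>)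
        \<le> 2 * (fst (\<gamma> t))^2 * ((1/2 - c) * \<bar>fst (\<gamma> t)\<bar> powr a)"
      by (rule mult_left_mono) simp
    moreover have "2 * (fst (\<gamma> t))^2 * ((1/2 - c) * \<bar>fst (\<gamma> t)\<bar> powr a)
        = - (2 * (c - 1/2) * ((fst (\<gamma> t))^2 * \<bar>fst (\<gamma> t)\<bar> powr a))"
      by (simp add: algebra_simps)
    ultimately show "2 * (fst (\<gamma> t))^2 * ((1/2) * \<bar>fst (\<gamma> t)\<bar> powr a - \<bar>snd (\<gamma> t)\<bar>) + k \<le> 0"
      by linarith
  qed (use T in auto)
  moreover have "k * T = (fst p)^2 + k" using k by (simp add: T_def field_simps)
  ultimately show False
    using k sol_onD(2)[OF sol_T] zero_le_power2[of "fst (\<gamma> T)"] by simp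
qed

lemma y_dominant_fst_tendsto_0:
  assumes sol: "complete_sol (vf a) p \<gamma>" and dom: "y_dominant a p"
  shows "((\<lambda>t. fst (\<gamma> t)) \<longlongrightarrow> 0) at_top"
proof (rule tendstoI)
  fix \<epsilon> :: real assume "0 < \<epsilon>"
  then obtain t1 where t1: "0 \<le> t1" "\<bar>fst (\<gamma> t1)\<bar> < \<epsilon>"
    using y_dominant_fst_eventually_small[OF sol dom] by blast
  have "\<bar>fst (\<gamma> t)\<bar> < \<epsilon>" if "t1 \<le> t" for t
  proof -
    have "(fst (\<gamma> t))^2 \<le> (fst (\<gamma> t1))^2"
      using that t1 by (intro y_dominant_fst_sq_antimono[OF complete_sol_imp_sol_on[OF sol, where T=t] dom]) auto
    then have "\<bar>fst (\<gamma> t)\<bar> \<le> \<bar>fst (\<gamma> t1)\<bar>" by (simp only: abs_le_square_iff)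
    then show ?thesis using t1 by linarith
  qed
  then show "\<forall>\<^sub>F t in at_top. dist (fst (\<gamma> t)) 0 < \<epsilon>"
    by (auto simp: eventually_at_top_linorder)
qed

text \<open>While \<open>\<bar>x\<bar> powr a < \<epsilon>/2 \<le> \<epsilon> \<le> \<bar>y\<bar>\<close>, we have \<open>\<bar>y\<bar>' \<le> -\<epsilon>\<^sup>3/2\<close>.\<close>

lemma snd_eventually_small:
  assumes sol: "complete_sol (vf a) p \<gamma>" and y0: "snd p \<noteq> 0" and e: "0 < \<epsilon>" and t1: "0 \<le> t1"
    and small: "\<And>t. t1 \<le> t \<Longrightarrow> \<bar>fst (\<gamma> t)\<bar> powr a < \<epsilon>/2"
  shows "\<exists>t\<ge>t1. \<bar>snd (\<gamma> t)\<bar> < \<epsilon>"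
proof (rule ccontr)
  assume "\<not> (\<exists>t\<ge>t1. \<bar>snd (\<gamma> t)\<bar> < \<epsilon>)"
  then have big: "\<And>t. t1 \<le> t \<Longrightarrow> \<epsilon> \<le> \<bar>snd (\<gamma> t)\<bar>" by force
  define k where "k = \<epsilon>^3 / 2"
  have k: "0 < k" using e by (simp add: k_def)
  define T where "T = t1 + \<bar>snd (\<gamma> t1)\<bar> / k + 1"
  have T: "0 \<le> T" "t1 \<le> T" using k t1 by (auto simp: T_def)
  have sol_T: "sol_on (vf a) p T \<gamma>" by (rule complete_sol_imp_sol_on[OF sol T(1)])
  have "\<bar>snd (\<gamma> T)\<bar> + k * T \<le> \<bar>snd (\<gamma> t1)\<bar> + k * t1"
  proof (rule has_real_derivative_nonpos_imp_antimono[where f="\<lambda>t. \<bar>snd (\<gamma> t)\<bar> + k * t" and a=t1])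
    fix t assume t: "t \<in> {t1..T}"
    then have t0: "t \<in> {0..T}" using t1 by auto
    have y_nz: "snd (\<gamma> t) \<noteq> 0" using sol_coordinate_eq_0_iff(2)[OF sol_T t0] y0 by simp
    have "((\<lambda>t. \<bar>snd (\<gamma> t)\<bar>) has_real_derivative
        \<bar>snd (\<gamma> t)\<bar> * \<bar>snd (\<gamma> t)\<bar> * (\<bar>fst (\<gamma> t)\<bar> powr a - \<bar>snd (\<gamma> t)\<bar>)) (at t within {t1..T})"
      by (rule DERIV_subset[OF sol_has_real_derivatives(5)[OF sol_T t0 y_nz]]) (use t1 in auto)
    from DERIV_add[OF this DERIV_cmult[OF DERIV_ident, of k]]
    show "((\<lambda>t. \<bar>snd (\<gamma> t)\<bar> + k * t) has_real_derivative
        \<bar>snd (\<gamma> t)\<bar> * \<bar>snd (\<gamma> t)\<bar> * (\<bar>fst (\<gamma> t)\<bar> powr a - \<bar>snd (\<gamma> t)\<bar>) + k) (at t within {t1..T})"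
      by simp
    have y2: "\<epsilon> * \<epsilon> \<le> \<bar>snd (\<gamma> t)\<bar> * \<bar>snd (\<gamma> t)\<bar>" using big[of t] t e by (intro mult_mono) auto
    have D: "\<bar>fst (\<gamma> t)\<bar> powr a - \<bar>snd (\<gamma> t)\<bar> \<le> - (\<epsilon>/2)" using big[of t] small[of t] t by auto
    have "\<bar>snd (\<gamma> t)\<bar> * \<bar>snd (\<gamma> t)\<bar> * (\<bar>fst (\<gamma> t)\<bar> powr a - \<bar>snd (\<gamma> t)\<bar>)
        \<le> (\<epsilon> * \<epsilon>) * (\<bar>fst (\<gamma> t)\<bar> powr a - \<bar>snd (\<gamma> t)\<bar>)"
      by (rule mult_right_mono_neg[OF y2]) (use D e in linarith)
    also have "\<dots> \<le> (\<epsilon> * \<epsilon>) * (- (\<epsilon>/2))" by (rule mult_left_mono[OF D]) simp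
    finally show "\<bar>snd (\<gamma> t)\<bar> * \<bar>snd (\<gamma> t)\<bar> * (\<bar>fst (\<gamma> t)\<bar> powr a - \<bar>snd (\<gamma> t)\<bar>) + k \<le> 0"
      by (simp add: k_def power3_eq_cube)
  qed (use T in auto)
  moreover have "k * T = k * t1 + \<bar>snd (\<gamma> t1)\<bar> + k" using k by (simp add: T_def field_simps)
  ultimately show False using k by simp
qed

lemma y_dominant_snd_tendsto_0:
  assumes sol: "complete_sol (vf a) p \<gamma>" and dom: "y_dominant a p"
  shows "((\<lambda>t. snd (\<gamma> t)) \<longlongrightarrow> 0) at_top"
proof (rule tendstoI)
  fix \<epsilon> :: real assume e: "0 < \<epsilon>"
  have "((\<lambda>t. \<bar>fst (\<gamma> t)\<bar> powr a) \<longlongrightarrow> 0) at_top"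
    using y_dominant_fst_tendsto_0[OF sol dom] a_pos
    by (intro tendsto_zero_powrI tendsto_rabs_zero) auto
  then have "\<forall>\<^sub>F t in at_top. \<bar>fst (\<gamma> t)\<bar> powr a < \<epsilon>/2"
    using e by (intro order_tendstoD(2)) auto
  then obtain t1 where t1: "\<And>t. t1 \<le> t \<Longrightarrow> \<bar>fst (\<gamma> t)\<bar> powr a < \<epsilon>/2"
    by (auto simp: eventually_at_top_linorder)
  obtain t2 where t2: "t2 \<ge> max t1 0" "\<bar>snd (\<gamma> t2)\<bar> < \<epsilon>"
    using snd_eventually_small[OF sol y_dominant_snd_nonzero[OF dom] e, of "max t1 0"] t1 by auto
  have "\<bar>snd (\<gamma> t)\<bar> < \<epsilon>" if "t2 \<le> t" for t
  proof (rule abs_snd_barrier[OF complete_sol_imp_sol_on[OF sol, where T=t] y_dominant_snd_nonzero[OF dom]])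
    fix u assume "u \<in> {t2..t}"
    then have "\<bar>fst (\<gamma> u)\<bar> powr a < \<epsilon>/2" using t1 t2 by simp
    then show "\<bar>fst (\<gamma> u)\<bar> powr a < \<epsilon>" using e by linarith
  qed (use that t2 in auto)
  then show "\<forall>\<^sub>F t in at_top. dist (snd (\<gamma> t)) 0 < \<epsilon>"
    by (auto simp: eventually_at_top_linorder)
qed

lemma y_dominant_tendsto_0:
  assumes "complete_sol (vf a) p \<gamma>" and "y_dominant a p"
  shows "(\<gamma> \<longlongrightarrow> 0) at_top"
  using tendsto_Pair[OF y_dominant_fst_tendsto_0[OF assms] y_dominant_snd_tendsto_0[OF assms]]
  by (simp add: zero_prod_def)

text \<open>The clamped flow cannot leave the cube through a point where its projection, a genuine
  solution up to that time, is known to stay strictly inside.\<close>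

lemma complete_sol_planar_flow:
  assumes start: "cube_norm (lift_pt a p) < R"
    and inside: "\<And>t. 0 < t \<Longrightarrow> sol_on (vf a) p t (planar_flow a R p) \<Longrightarrow>
        cube_norm (lift_pt a (planar_flow a R p t)) < R"
  shows "complete_sol (vf a) p (planar_flow a R p)"
proof -
  have R: "0 \<le> R" using start cube_norm_nonneg[of "lift_pt a p"] by simp
  have bounded: "cube_norm (clamped_flow a R (lift_pt a p) s) \<le> R" if "s \<in> {0..T}" for s T
  proof -
    have t: "s \<in> {0..s}" using that by simp
    define h where "h s = cube_norm (clamped_flow a R (lift_pt a p) s) - R" for s
    have "h s < 0"
    proof (rule negative_if_no_first_zero[where h=h, OF _ _ _ t])
      show "continuous_on {0..s} h"
        unfolding h_def
        by (rule continuous_on_diff[OF continuous_cube_norm[OF continuous_on_clamped_flow[OF R]] continuous_on_const])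
      show "h 0 < 0" using start clamped_flow(1)[OF R] by (simp add: h_def)
      fix u assume u: "u \<in> {0..s}" "0 < u" "h u = 0" "\<forall>v\<in>{0..<u}. h v < 0"
      have b: "cube_norm (clamped_flow a R (lift_pt a p) v) \<le> R" if "v \<in> {0..u}" for v
      proof (cases "v = u")
        case False
        with that have "v \<in> {0..<u}" by auto
        with u(4) have "h v < 0" by blast
        then show ?thesis by (simp add: h_def)
      qed (use u(3) in \<open>simp add: h_def\<close>)
      have "cube_norm (clamped_flow a R (lift_pt a p) u) < R"
        using inside[OF u(2) planar_flow_sol_on[OF R _ b]] clamped_flow_eq_lift[OF R b, of u] u by simp
      with u(3) show False by (simp add: h_def)
    qed
    then show ?thesis by (simp add: h_def)
  qed
  show ?thesis
    unfolding complete_sol_def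
  proof (intro conjI allI impI)
    show "planar_flow a R p 0 = p"
      using sol_onD(2)[OF planar_flow_sol_on[where T=0, OF R _ bounded[where T=0]]] by simp
    fix t :: real assume t: "0 \<le> t"
    have "(planar_flow a R p has_vector_derivative vf a (planar_flow a R p t)) (at t within {0..t+1})"
      using sol_onD(3)[OF planar_flow_sol_on[where T="t + 1", OF R _ bounded[where T="t + 1"]]] t by simp
    moreover have "at t within {0..} = at t within {0..t+1}"
      by (rule at_within_nhd[where S="{..<t+1}"]) auto
    ultimately show "(planar_flow a R p has_vector_derivative vf a (planar_flow a R p t)) (at t within {0..})"
      by simp
  qed
qed

lemma y_dominant_complete_sol:
  assumes dom: "y_dominant a p"
  shows "complete_sol (vf a) p (planar_flow a (orbit_bound a p + 1) p)"
proof (rule complete_sol_planar_flow)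
  show "cube_norm (lift_pt a p) < orbit_bound a p + 1"
    using orbit_bound_ge[of p a] by (simp add: cube_norm_def lift_pt_def)
  fix t assume "0 < t" and sol: "sol_on (vf a) p t (planar_flow a (orbit_bound a p + 1) p)"
  then show "cube_norm (lift_pt a (planar_flow a (orbit_bound a p + 1) p t)) < orbit_bound a p + 1"
    using y_dominant_bounds(2)[OF sol dom, of t] by simp
qed

lemma y_dominant_mem_local_basin:
  assumes dom: "y_dominant a p" and bound: "orbit_bound a p < \<delta>"
  shows "p \<in> local_basin (vf a) {0} \<delta>"
  unfolding local_basin_def basin_def attracted_def stays_in_def
proof (intro CollectI conjI allI impI ballI)
  show "\<exists>\<gamma>. complete_sol (vf a) p \<gamma>" using y_dominant_complete_sol[OF dom] by blast
  fix \<gamma> assume "complete_sol (vf a) p \<gamma>"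
  then show "omega_limit \<gamma> \<subseteq> {0}"
    by (rule omega_limit_subset_of_tendsto[OF y_dominant_tendsto_0[OF _ dom]])
next
  fix T \<gamma> t assume "sol_on (vf a) p T \<gamma>" and "t \<in> {0..T}"
  then have "norm (\<gamma> t) \<le> orbit_bound a p" by (rule y_dominant_bounds(1)[OF _ dom])
  then show "\<gamma> t \<in> nbhd {0} \<delta>" using bound by (simp add: nbhd_def)
qed

end

section \<open>Measurability of the local basin\<close>

lemma nbhd_singleton_0 [simp]: "nbhd {0} e = ball 0 e"
  by (auto simp: nbhd_def ball_def dist_commute)

lemma tendsto_0_if_bounded_omega_limit_0:
  fixes \<gamma> :: "real \<Rightarrow> pt"
  assumes bounded: "\<And>t. 0 \<le> t \<Longrightarrow> norm (\<gamma> t) \<le> B" and omega: "omega_limit \<gamma> \<subseteq> {0}"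
  shows "(\<gamma> \<longlongrightarrow> 0) at_top"
proof (rule ccontr)
  assume "\<not> (\<gamma> \<longlongrightarrow> 0) at_top"
  then obtain e where e: "0 < e" and "\<not> eventually (\<lambda>t. norm (\<gamma> t) < e) at_top"
    unfolding tendsto_iff by auto
  then have "\<exists>t. real n \<le> t \<and> e \<le> norm (\<gamma> t)" for n :: nat
    by (auto simp: eventually_at_top_linorder not_less)
  then obtain s where s: "\<And>n. real n \<le> s n" "\<And>n. e \<le> norm (\<gamma> (s n))" by metis
  have "\<forall>n. (\<gamma> \<circ> s) n \<in> cball 0 B"
  proof
    fix n
    have "0 \<le> s n" using s(1)[of n] of_nat_0_le_iff[of n] by linarith
    then show "(\<gamma> \<circ> s) n \<in> cball 0 B" using bounded by simp
  qed
  then obtain l r where r: "strict_mono r" and lim: "((\<gamma> \<circ> s) \<circ> r) \<longlonglongrightarrow> l"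
    using seq_compactE[OF compact_imp_seq_compact[OF compact_cball]] by blast
  have "filterlim (s \<circ> r) at_top sequentially"
  proof (rule filterlim_at_top_mono[OF filterlim_real_sequentially always_eventually], rule allI)
    fix n
    show "real n \<le> (s \<circ> r) n" using seq_suble[OF r, of n] s(1)[of "r n"] by simp
  qed
  with lim have "l \<in> omega_limit \<gamma>" by (auto simp: omega_limit_def comp_assoc)
  with omega have "l = 0" by auto
  moreover have "e \<le> norm l"
    using tendsto_norm[OF lim] s(2) by (intro tendsto_lowerbound) (auto simp: comp_def)
  ultimately show False using e by simp
qed

context planar_system
begin

lemma orbit_bound_less_if_norm_small:
  assumes "norm r < min (\<delta>/3) ((\<delta>/3) powr (1/a))" and "0 < \<delta>"
  shows "orbit_bound a r < \<delta>"
proof -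
  have x: "\<bar>fst r\<bar> < min (\<delta>/3) ((\<delta>/3) powr (1/a))" and y: "\<bar>snd r\<bar> < \<delta>/3"
    using assms(1) norm_fst_le[of "fst r" "snd r"] norm_snd_le[of "snd r" "fst r"] by auto
  have "\<bar>fst r\<bar> powr a < ((\<delta>/3) powr (1/a)) powr a" using x a_pos by (intro powr_less_mono2) auto
  also have "\<dots> = \<delta>/3" using a_pos assms(2) by (simp add: powr_powr)
  finally show ?thesis using x y by (simp add: orbit_bound_def)
qed

text \<open>Outside the \<open>y\<close>-dominant region \<open>\<bar>x\<bar>\<close> is nondecreasing, so a nonzero solution tending to \<open>0\<close>
  must enter that region at arbitrarily late times.\<close>

lemma tendsto_0_imp_y_dominant:
  assumes sol: "complete_sol (vf a) p \<gamma>" and p: "p \<noteq> 0" and lim: "(\<gamma> \<longlongrightarrow> 0) at_top" and T0: "0 \<le> T0"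
  shows "\<exists>t\<ge>T0. y_dominant a (\<gamma> t)"
proof (rule ccontr)
  assume "\<not> (\<exists>t\<ge>T0. y_dominant a (\<gamma> t))"
  then have not_dom: "\<And>t. T0 \<le> t \<Longrightarrow> \<bar>snd (\<gamma> t)\<bar> \<le> (1/2) * \<bar>fst (\<gamma> t)\<bar> powr a"
    by (auto simp: y_dominant_def not_less)
  have mono: "(fst (\<gamma> T0))^2 \<le> (fst (\<gamma> t))^2" if t: "T0 \<le> t" for t
  proof (rule has_real_derivative_nonneg_imp_mono[where f="\<lambda>s. (fst (\<gamma> s))^2" and a=T0 and b=t])
    fix u assume u: "u \<in> {T0..t}"
    have "sol_on (vf a) p t \<gamma>" using sol t T0 by (intro complete_sol_imp_sol_on) auto
    then show "((\<lambda>s. (fst (\<gamma> s))^2) has_real_derivative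
        2 * (fst (\<gamma> u))^2 * ((1/2) * \<bar>fst (\<gamma> u)\<bar> powr a - \<bar>snd (\<gamma> u)\<bar>)) (at u within {T0..t})"
      using u T0 by (intro DERIV_subset[OF sol_has_real_derivatives(4)]) auto
    show "0 \<le> 2 * (fst (\<gamma> u))^2 * ((1/2) * \<bar>fst (\<gamma> u)\<bar> powr a - \<bar>snd (\<gamma> u)\<bar>)"
      using not_dom[of u] u by simp
  qed (use t in auto)
  have "((\<lambda>t. (fst (\<gamma> t))^2) \<longlongrightarrow> (fst (0::pt))^2) at_top"
    by (intro tendsto_intros lim)
  then have "((\<lambda>t. (fst (\<gamma> t))^2) \<longlongrightarrow> 0) at_top" by simp
  then have "(fst (\<gamma> T0))^2 \<le> 0"
    by (rule tendsto_lowerbound) (auto simp: eventually_at_top_linorder intro!: exI[of _ T0] mono)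
  then have "\<gamma> T0 = 0" using not_dom[of T0] a_pos by (simp add: prod_eq_iff)
  with sol_eq_0_iff[OF complete_sol_imp_sol_on[OF sol T0], of T0] p T0 show False by simp
qed

lemma local_basin_trajectory:
  assumes "p \<in> local_basin (vf a) {0} \<delta>" and sol: "complete_sol (vf a) p \<gamma>"
  shows "\<And>t. 0 \<le> t \<Longrightarrow> norm (\<gamma> t) < \<delta>" and "(\<gamma> \<longlongrightarrow> 0) at_top"
proof -
  have stays: "stays_in (vf a) p (ball 0 \<delta>)" and attr: "attracted (vf a) {0} p"
    using assms(1) by (auto simp: local_basin_def basin_def)
  show bounded: "norm (\<gamma> t) < \<delta>" if "0 \<le> t" for t
    using stays complete_sol_imp_sol_on[OF sol that] that by (auto simp: stays_in_def)
  show "(\<gamma> \<longlongrightarrow> 0) at_top"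
    using attr sol by (intro tendsto_0_if_bounded_omega_limit_0[OF less_imp_le[OF bounded]])
      (auto simp: attracted_def)
qed

lemma clamped_flow_uniformly_close:
  assumes R: "0 \<le> R" and t1: "0 \<le> t1" and \<eta>: "0 < \<eta>"
  shows "\<exists>\<rho>>0. \<forall>q\<in>ball p \<rho>. \<forall>t\<in>{0..t1}.
    norm (clamped_flow a R (lift_pt a q) t - clamped_flow a R (lift_pt a p) t) < \<eta>"
proof -
  define E where "E = exp (lifted_lip a R * t1)"
  have E: "0 < E" by (simp add: E_def)
  have "isCont (lift_pt a) p"
    using continuous_lift_pt[of UNIV] continuous_on_eq_continuous_at[OF open_UNIV] by blast
  moreover have "0 < \<eta> / E" using \<eta> E by simp
  ultimately obtain \<rho> where \<rho>: "0 < \<rho>" "\<And>q. dist q p < \<rho> \<Longrightarrow> dist (lift_pt a q) (lift_pt a p) < \<eta> / E"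
    unfolding continuous_at_eps_delta by blast
  have "norm (clamped_flow a R (lift_pt a q) t - clamped_flow a R (lift_pt a p) t) < \<eta>"
    if q: "q \<in> ball p \<rho>" and t: "t \<in> {0..t1}" for q t
  proof -
    have "norm (clamped_flow a R (lift_pt a q) t - clamped_flow a R (lift_pt a p) t)
        \<le> norm (lift_pt a q - lift_pt a p) * exp (lifted_lip a R * t)"
      by (rule clamped_flow_dist_le[OF R]) (use t in simp)
    also have "\<dots> \<le> norm (lift_pt a q - lift_pt a p) * E"
      unfolding E_def using t lifted_lip_nonneg[OF R] by (intro mult_left_mono) (auto intro: mult_left_mono)
    also have "\<dots> < (\<eta> / E) * E"
      using \<rho>(2)[of q] q E by (intro mult_strict_right_mono) (auto simp: dist_norm norm_minus_commute dist_commute)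
    finally show ?thesis using E by simp
  qed
  with \<rho>(1) show ?thesis by blast
qed

lemma mem_local_basin_if_reaches_y_dominant:
  assumes sol: "sol_on (vf a) q t1 \<sigma>" and in_ball: "\<And>t. t \<in> {0..t1} \<Longrightarrow> norm (\<sigma> t) < \<delta>"
    and dom: "y_dominant a (\<sigma> t1)" and bound: "orbit_bound a (\<sigma> t1) < \<delta>"
    and complete: "complete_sol (vf a) q \<gamma>"
  shows "q \<in> local_basin (vf a) {0} \<delta>"
  unfolding local_basin_def basin_def attracted_def stays_in_def
proof (intro CollectI conjI allI impI ballI)
  have t1: "0 \<le> t1" by (rule sol_onD(1)[OF sol])
  have at_t1: "\<zeta> t1 = \<sigma> t1" if "sol_on (vf a) q T \<zeta>" "t1 \<le> T" for \<zeta> T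
    using sol_unique[OF sol_on_restrict[OF that(1) t1 that(2)] sol] t1 by simp
  show "\<exists>\<gamma>. complete_sol (vf a) q \<gamma>" using complete by blast
  fix \<zeta> assume \<zeta>: "complete_sol (vf a) q \<zeta>"
  have "complete_sol (vf a) (\<sigma> t1) (\<lambda>s. \<zeta> (t1 + s))"
    using complete_sol_shift[OF \<zeta> t1] at_t1[OF complete_sol_imp_sol_on[OF \<zeta> t1]] by simp
  then have "((\<lambda>s. \<zeta> (t1 + s)) \<longlongrightarrow> 0) at_top" using dom by (rule y_dominant_tendsto_0)
  moreover have "filterlim (\<lambda>t. - t1 + t) at_top at_top"
    by (rule filterlim_tendsto_add_at_top[OF tendsto_const filterlim_ident])
  ultimately have "((\<lambda>t. \<zeta> (t1 + (- t1 + t))) \<longlongrightarrow> 0) at_top" by (rule filterlim_compose)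
  then show "omega_limit \<zeta> \<subseteq> {0}" by (intro omega_limit_subset_of_tendsto) simp
next
  have t1: "0 \<le> t1" by (rule sol_onD(1)[OF sol])
  fix T \<zeta> t assume \<zeta>: "sol_on (vf a) q T \<zeta>" and t: "t \<in> {0..T}"
  show "\<zeta> t \<in> nbhd {0} \<delta>"
  proof (cases "t \<le> t1")
    case True
    then have "\<zeta> t = \<sigma> t"
      using sol_unique[OF sol_on_restrict[OF \<zeta>, of t] sol_on_restrict[OF sol, of t]] t by auto
    then show ?thesis using in_ball[of t] t True by simp
  next
    case False
    have "\<zeta> t1 = \<sigma> t1"
      using sol_unique[OF sol_on_restrict[OF \<zeta> t1] sol, of t1] False t t1 by simp
    then have "sol_on (vf a) (\<sigma> t1) (T - t1) (\<lambda>s. \<zeta> (t1 + s))"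
      using sol_on_shift[OF \<zeta> t1] False t by simp
    from y_dominant_bounds(1)[OF this dom, of "t - t1"]
    show ?thesis using False t bound by simp
  qed
qed

lemma complete_sol_planar_flow_if_reaches_y_dominant:
  assumes t1: "0 \<le> t1"
    and in_cube: "\<And>t. t \<in> {0..t1} \<Longrightarrow> cube_norm (clamped_flow a R (lift_pt a q) t) < R"
    and dom: "y_dominant a (planar_flow a R q t1)" and bound: "orbit_bound a (planar_flow a R q t1) < R"
  shows "complete_sol (vf a) q (planar_flow a R q)"
proof (rule complete_sol_planar_flow)
  have R: "0 \<le> R" using in_cube[of 0] t1 cube_norm_nonneg[of "clamped_flow a R (lift_pt a q) 0"] by simp
  show "cube_norm (lift_pt a q) < R" using in_cube[of 0] t1 clamped_flow(1)[OF R] by simp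
  fix u assume u: "0 < u" and sol: "sol_on (vf a) q u (planar_flow a R q)"
  show "cube_norm (lift_pt a (planar_flow a R q u)) < R"
  proof (cases "u \<le> t1")
    case True
    then have "clamped_flow a R (lift_pt a q) u = lift_pt a (planar_flow a R q u)"
      using in_cube u by (intro clamped_flow_eq_lift[OF R, where T=t1]) (auto simp: less_imp_le)
    then show ?thesis using in_cube[of u] True u by simp
  next
    case False
    then have "sol_on (vf a) (planar_flow a R q t1) (u - t1) (\<lambda>s. planar_flow a R q (t1 + s))"
      using sol_on_shift[OF sol t1] by simp
    from y_dominant_bounds(2)[OF this dom, of "u - t1"]
    show ?thesis using False bound by simp
  qed
qed

lemma local_basin_reaches_y_dominant:
  assumes p: "p \<in> local_basin (vf a) {0} \<delta>" "p \<noteq> 0" and sol: "complete_sol (vf a) p \<gamma>"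
  shows "\<exists>t1\<ge>0. y_dominant a (\<gamma> t1) \<and> orbit_bound a (\<gamma> t1) < \<delta>"
proof -
  note in_ball = local_basin_trajectory(1)[OF p(1) sol] and lim = local_basin_trajectory(2)[OF p(1) sol]
  have \<delta>: "0 < \<delta>" using in_ball[of 0] norm_ge_zero[of "\<gamma> 0"] by linarith
  have "\<forall>\<^sub>F t in at_top. norm (\<gamma> t) < min (\<delta>/3) ((\<delta>/3) powr (1/a))"
    using tendsto_norm_zero[OF lim] \<delta> by (intro order_tendstoD(2)) auto
  then obtain T0 where T0: "\<And>t. T0 \<le> t \<Longrightarrow> norm (\<gamma> t) < min (\<delta>/3) ((\<delta>/3) powr (1/a))"
    by (auto simp: eventually_at_top_linorder)
  obtain t1 where "max T0 0 \<le> t1" "y_dominant a (\<gamma> t1)"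
    using tendsto_0_imp_y_dominant[OF sol p(2) lim, of "max T0 0"] by auto
  with orbit_bound_less_if_norm_small[OF T0 \<delta>] show ?thesis by auto
qed

text \<open>Away from the origin the local basin is open: a point of it is eventually carried into the
  open set of \<open>y\<close>-dominant points of small orbit bound, and by continuous dependence of the lifted
  flow so are all nearby points.\<close>

lemma local_basin_nhd:
  assumes p: "p \<in> local_basin (vf a) {0} \<delta>" "p \<noteq> 0"
  shows "\<exists>\<rho>>0. ball p \<rho> \<subseteq> local_basin (vf a) {0} \<delta>"
proof -
  obtain \<gamma> where sol: "complete_sol (vf a) p \<gamma>"
    using p(1) by (auto simp: local_basin_def basin_def attracted_def)
  note in_ball = local_basin_trajectory(1)[OF p(1) sol]
  have \<delta>: "0 < \<delta>" using in_ball[of 0] norm_ge_zero[of "\<gamma> 0"] by linarith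
  define good where "good = {r. y_dominant a r \<and> orbit_bound a r < \<delta>}"
  obtain t1 where t1: "0 \<le> t1" "\<gamma> t1 \<in> good"
    using local_basin_reaches_y_dominant[OF p sol] by (auto simp: good_def)
  then obtain \<eta>2 where \<eta>2: "0 < \<eta>2" "ball (\<gamma> t1) \<eta>2 \<subseteq> good"
    using open_y_dominant_bounded[of \<delta>] unfolding good_def open_contains_ball by blast
  have sol_t1: "sol_on (vf a) p t1 \<gamma>" by (rule complete_sol_imp_sol_on[OF sol t1(1)])
  obtain s where s: "s \<in> {0..t1}" "\<And>t. t \<in> {0..t1} \<Longrightarrow> norm (\<gamma> t) \<le> norm (\<gamma> s)"
    using continuous_attains_sup[OF compact_Icc _ continuous_on_norm[OF continuous_on_sol[OF sol_t1]]] t1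
    by auto
  obtain R0 where R0: "0 \<le> R0" "\<And>t. t \<in> {0..t1} \<Longrightarrow> cube_norm (lift_pt a (\<gamma> t)) \<le> R0"
    using sol_lift_bounded[OF sol_t1] by blast
  define R where "R = R0 + \<delta> + 1"
  have R: "0 \<le> R" "R0 \<le> R" "\<delta> \<le> R" using R0 \<delta> by (auto simp: R_def)
  have lift_eq: "lift_pt a (\<gamma> t) = clamped_flow a R (lift_pt a p) t" if "t \<in> {0..t1}" for t
    by (rule sol_eq_clamped_flow[OF sol_t1 R(1) order_trans[OF R0(2) R(2)] that])
  define \<eta> where "\<eta> = min 1 (min (\<delta> - norm (\<gamma> s)) \<eta>2)"
  have \<eta>: "0 < \<eta>" "\<eta> \<le> 1" "\<eta> \<le> \<delta> - norm (\<gamma> s)" "\<eta> \<le> \<eta>2"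
    using in_ball[of s] s \<eta>2 by (auto simp: \<eta>_def)
  obtain \<rho> where \<rho>: "0 < \<rho>" "\<And>q t. q \<in> ball p \<rho> \<Longrightarrow> t \<in> {0..t1} \<Longrightarrow>
      norm (clamped_flow a R (lift_pt a q) t - lift_pt a (\<gamma> t)) < \<eta>"
    using clamped_flow_uniformly_close[OF R(1) t1(1) \<eta>(1), of p] lift_eq by auto
  have "q \<in> local_basin (vf a) {0} \<delta>" if q: "q \<in> ball p \<rho>" for q
  proof -
    have in_cube: "cube_norm (clamped_flow a R (lift_pt a q) t) < R" if "t \<in> {0..t1}" for t
      using cube_norm_diff_le[of "clamped_flow a R (lift_pt a q) t" "lift_pt a (\<gamma> t)"]
        \<rho>(2)[OF q that] R0(2)[OF that] \<eta> \<delta> by (simp add: R_def)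
    have close: "norm (planar_flow a R q t - \<gamma> t) < \<eta>" if "t \<in> {0..t1}" for t
      using norm_proj_pt_diff_le[of "clamped_flow a R (lift_pt a q) t" "lift_pt a (\<gamma> t)"] \<rho>(2)[OF q that]
      by (simp add: planar_flow_def)
    have "planar_flow a R q t1 \<in> ball (\<gamma> t1) \<eta>2"
      using close[of t1] t1 \<eta> by (simp add: dist_norm norm_minus_commute)
    then have dom: "y_dominant a (planar_flow a R q t1)" and bound: "orbit_bound a (planar_flow a R q t1) < \<delta>"
      using \<eta>2(2) by (auto simp: good_def)
    show ?thesis
    proof (rule mem_local_basin_if_reaches_y_dominant[where \<sigma>="planar_flow a R q", OF _ _ dom bound])
      show "sol_on (vf a) q t1 (planar_flow a R q)"
        using in_cube by (intro planar_flow_sol_on[OF R(1) t1(1)]) (simp add: less_imp_le)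
      show "norm (planar_flow a R q t) < \<delta>" if "t \<in> {0..t1}" for t
        using norm_triangle_ineq[of "\<gamma> t" "planar_flow a R q t - \<gamma> t"] close[OF that] s(2)[OF that] \<eta>
        by simp
      show "complete_sol (vf a) q (planar_flow a R q)"
        using bound R(3) by (intro complete_sol_planar_flow_if_reaches_y_dominant[OF t1(1) in_cube dom]) auto
    qed
  qed
  with \<rho>(1) show ?thesis by blast
qed

lemma local_basin_sets_lebesgue: "local_basin (vf a) {0} \<delta> \<in> sets lebesgue"
proof -
  define L where "L = local_basin (vf a) {0} \<delta>"
  have "open (L - {0})"
    unfolding open_contains_ball
  proof
    fix p assume p: "p \<in> L - {0}"
    then obtain \<rho> where \<rho>: "0 < \<rho>" "ball p \<rho> \<subseteq> L" using local_basin_nhd[of p \<delta>] by (auto simp: L_def)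
    then have "ball p (min \<rho> (norm p)) \<subseteq> L - {0}" by (auto simp: dist_norm)
    with \<rho>(1) p show "\<exists>e>0. ball p e \<subseteq> L - {0}" by (intro exI[of _ "min \<rho> (norm p)"]) auto
  qed
  then have "L - {0} \<in> sets lebesgue" by (simp add: borel_open sets_completionI_sets)
  moreover have "L \<inter> {0} \<in> sets lebesgue"
    by (cases "0 \<in> L") (auto simp: Int_absorb1 intro!: sets_completionI_sets borel_closed)
  ultimately have "(L - {0}) \<union> (L \<inter> {0}) \<in> sets lebesgue" by blast
  then show ?thesis by (simp add: L_def Un_Diff_Int)
qed

lemma local_basin_emeasure_pos:
  assumes "0 < \<delta>"
  shows "0 < emeasure lebesgue (local_basin (vf a) {0} \<delta>)"
proof -
  have "(0, \<delta>/2) \<in> {r. y_dominant a r \<and> orbit_bound a r < \<delta>}"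
    using assms by (simp add: y_dominant_def orbit_bound_def)
  then obtain r where r: "0 < r" "ball (0, \<delta>/2) r \<subseteq> {r. y_dominant a r \<and> orbit_bound a r < \<delta>}"
    using open_y_dominant_bounded[of \<delta>] unfolding open_contains_ball by blast
  then have sub: "ball (0, \<delta>/2) r \<subseteq> local_basin (vf a) {0} \<delta>"
    using y_dominant_mem_local_basin by blast
  have "emeasure lebesgue (ball (0::real, \<delta>/2) r) = ennreal (unit_ball_vol 2 * r^2)"
    using emeasure_ball[of r "(0::real, \<delta>/2)"] r(1) by (simp add: power2_eq_square)
  then have "0 < emeasure lebesgue (ball (0::real, \<delta>/2) r)" using r(1) by simp
  also have "\<dots> \<le> emeasure lebesgue (local_basin (vf a) {0} \<delta>)"
    by (rule emeasure_mono[OF sub local_basin_sets_lebesgue])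
  finally show ?thesis .
qed

theorem frag_as_origin: "frag_as (vf a) {0}"
  unfolding frag_as_def using local_basin_sets_lebesgue local_basin_emeasure_pos by blast

end

section \<open>The cusp\<close>

definition cusp :: "real \<Rightarrow> pt set" where
  "cusp a = {p. fst p \<noteq> 0 \<and> 4 * \<bar>snd p\<bar> < \<bar>fst p\<bar> powr a}"

lemma ball_diff_cusp_subset:
  assumes a: "0 < a"
  shows "ball 0 \<epsilon> - cusp a \<subseteq> cbox (- ((4*\<epsilon>) powr (1/a)), - \<epsilon>) ((4*\<epsilon>) powr (1/a), \<epsilon>)"
proof
  fix p :: pt assume p: "p \<in> ball 0 \<epsilon> - cusp a"
  obtain x y where xy: "p = (x, y)" by (cases p)
  have y: "\<bar>y\<bar> < \<epsilon>" using p norm_snd_le[of y x] by (simp add: xy)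
  have "\<bar>x\<bar> \<le> (4*\<epsilon>) powr (1/a)"
  proof (cases "x = 0")
    case False
    then have "\<bar>x\<bar> powr a < 4 * \<epsilon>" using p y by (simp add: cusp_def xy)
    then have "(\<bar>x\<bar> powr a) powr (1/a) < (4*\<epsilon>) powr (1/a)" using a by (intro powr_less_mono2) auto
    then show ?thesis using a by (simp add: powr_powr)
  qed simp
  with y show "p \<in> cbox (- ((4*\<epsilon>) powr (1/a)), - \<epsilon>) ((4*\<epsilon>) powr (1/a), \<epsilon>)"
    by (simp add: xy cbox_Pair_eq abs_le_iff abs_less_iff)
qed

context planar_system
begin

lemma open_cusp: "open (cusp a)"
  unfolding cusp_def
  by (intro open_Collect_conj open_Collect_neq open_Collect_less continuous_on_abs_powr continuous_intros)

lemma measure_ball_diff_cusp_le: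
  assumes e: "0 < \<epsilon>"
  shows "measure lebesgue (ball 0 \<epsilon> - cusp a) \<le> 4 * \<epsilon> * (4*\<epsilon>) powr (1/a)"
proof -
  define b where "b = (4*\<epsilon>) powr (1/a)"
  have "ball 0 \<epsilon> - cusp a \<in> sets lebesgue"
    using open_cusp by (intro sets.Diff) (auto intro: sets_completionI_sets borel_open)
  then have "measure lebesgue (ball 0 \<epsilon> - cusp a) \<le> measure lebesgue (cbox (- b, - \<epsilon>) (b, \<epsilon>))"
    using ball_diff_cusp_subset[OF a_pos] by (intro measure_mono_fmeasurable) (auto simp: b_def)
  also have "\<dots> = measure lborel (cbox (- b, - \<epsilon>) (b, \<epsilon>))" by simp
  also have "\<dots> = (2 * b) * (2 * \<epsilon>)"
    unfolding Henstock_Kurzweil_Integration.content_Pair using e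
    by (simp add: b_def cbox_interval Henstock_Kurzweil_Integration.content_real)
  finally show ?thesis by (simp add: b_def mult_ac)
qed

lemma ball_diff_cusp_density_0:
  assumes a1: "a < 1"
  shows "((\<lambda>\<epsilon>. measure lebesgue (ball 0 \<epsilon> - cusp a) / measure lebesgue (ball (0::pt) \<epsilon>)) \<longlongrightarrow> 0)
    (at_right 0)"
proof (rule tendsto_sandwich[where f="\<lambda>_. 0"])
  define K where "K = 4 * 4 powr (1/a) / unit_ball_vol 2"
  show "((\<lambda>\<epsilon>. K * \<epsilon> powr (1/a - 1)) \<longlongrightarrow> 0) (at_right 0)"
    using a_pos a1
    by (intro tendsto_mult_right_zero tendsto_zero_powrI[OF tendsto_ident_at tendsto_const])
      (auto simp: field_simps eventually_at_right_less intro: eventually_mono[OF eventually_at_right_less])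
  have "measure lebesgue (ball 0 \<epsilon> - cusp a) / measure lebesgue (ball (0::pt) \<epsilon>) \<le> K * \<epsilon> powr (1/a - 1)"
    if e: "0 < \<epsilon>" for \<epsilon>
  proof -
    have ball: "measure lebesgue (ball (0::pt) \<epsilon>) = unit_ball_vol 2 * \<epsilon>^2"
      using content_ball[of \<epsilon> "0::pt"] e by (simp add: power2_eq_square)
    have "4 * \<epsilon> * (4*\<epsilon>) powr (1/a) = (4 * 4 powr (1/a)) * \<epsilon>^2 * \<epsilon> powr (1/a - 1)"
      using e by (simp add: powr_mult powr_diff power2_eq_square)
    then show ?thesis
      using measure_ball_diff_cusp_le[OF e] e by (simp add: ball K_def divide_right_mono field_simps)
  qed
  then show "\<forall>\<^sub>F \<epsilon> in at_right 0. measure lebesgue (ball 0 \<epsilon> - cusp a) / measure lebesgue (ball (0::pt) \<epsilon>)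
      \<le> K * \<epsilon> powr (1/a - 1)"
    by (auto simp: eventually_at_right_less intro: eventually_mono[OF eventually_at_right_less])
qed (auto intro: always_eventually)

text \<open>Barrier for \<open>16 y\<^sup>2 - \<bar>x\<bar> powr (2 a)\<close>: at a touching point its derivative is
  \<open>m\<^sup>3 (3 m - 4 a) / 8\<close> with \<open>m = \<bar>x\<bar> powr a\<close>, which is negative while \<open>m < a\<close>.\<close>

lemma cusp_invariant:
  assumes sol: "sol_on (vf a) p T \<gamma>" and p: "p \<in> cusp a"
    and small: "\<And>t. t \<in> {0..T} \<Longrightarrow> \<bar>fst (\<gamma> t)\<bar> powr a < a" and t: "t \<in> {0..T}"
  shows "\<gamma> t \<in> cusp a"
proof -
  define m y where "m s = \<bar>fst (\<gamma> s)\<bar> powr a" and "y s = snd (\<gamma> s)" for s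
  have x_nz: "fst (\<gamma> s) \<noteq> 0" if "s \<in> {0..T}" for s
    using sol_coordinate_eq_0_iff(1)[OF sol that] p by (simp add: cusp_def)
  then have m_pos: "0 < m s" if "s \<in> {0..T}" for s using that by (simp add: m_def)
  define h where "h s = 16 * (y s)^2 - (m s)^2" for s
  define h' where "h' s = 16 * (2 * (y s)^2 * \<bar>y s\<bar> * (m s - \<bar>y s\<bar>))
    - 2 * a * (m s)^2 * ((1/2) * m s - \<bar>y s\<bar>)" for s
  have "h t < 0"
  proof (rule negative_barrier[OF _ _ _ t])
    fix s assume s: "s \<in> {0..T}"
    have dy: "((\<lambda>s. (y s)^2) has_real_derivative 2 * (y s)^2 * \<bar>y s\<bar> * (m s - \<bar>y s\<bar>)) (at s within {0..T})"
      using DERIV_power[OF sol_has_real_derivatives(2)[OF sol s], of 2]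
      by (simp add: y_def m_def power2_eq_square algebra_simps)
    have dm: "((\<lambda>s. (m s)^2) has_real_derivative 2 * a * (m s)^2 * ((1/2) * m s - \<bar>y s\<bar>)) (at s within {0..T})"
      using DERIV_power[OF sol_has_real_derivatives(3)[OF sol s], of 2]
      by (simp add: y_def m_def power2_eq_square algebra_simps)
    show "(h has_real_derivative h' s) (at s within {0..T})"
      unfolding h_def[abs_def] h'_def by (rule DERIV_diff[OF DERIV_cmult[OF dy] dm])
  next
    have "(4 * \<bar>snd p\<bar>)^2 < (\<bar>fst p\<bar> powr a)^2"
      using p by (intro power_strict_mono) (auto simp: cusp_def)
    then show "h 0 < 0" using sol_onD(2)[OF sol] by (simp add: h_def m_def y_def power_mult_distrib)
  next
    fix s assume s: "s \<in> {0..T}" "0 < s" "h s = 0" "\<forall>u\<in>{0..<s}. h u < 0"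
    have "(4 * \<bar>y s\<bar>)^2 = (m s)^2" using s(3) by (simp add: h_def power_mult_distrib)
    then have "4 * \<bar>y s\<bar> = m s"
      by (rule power2_eq_iff_nonneg[THEN iffD1, rotated 2]) (use m_pos[OF s(1)] in auto)
    then have ys: "\<bar>y s\<bar> = m s / 4" by simp
    moreover have "(y s)^2 = (m s / 4)^2" using ys by (metis power2_abs)
    ultimately have "h' s = (m s)^3 / 8 * (3 * m s - 4 * a)"
      unfolding h'_def by (simp only:) (simp add: power2_eq_square power3_eq_cube algebra_simps)
    moreover have "(m s)^3 / 8 * (3 * m s - 4 * a) < 0"
      using m_pos[OF s(1)] small[OF s(1)] a_pos by (intro mult_pos_neg) (auto simp: m_def)
    ultimately show "h' s < 0" by simp
  qed
  then have "(4 * \<bar>y t\<bar>)^2 < (m t)^2" by (simp add: h_def power_mult_distrib)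
  then have "4 * \<bar>y t\<bar> < m t" by (rule power_less_imp_less_base) (use m_pos[OF t] in simp)
  then show ?thesis using x_nz[OF t] by (simp add: cusp_def m_def y_def)
qed

text \<open>In the cusp \<open>(x\<^sup>2)' = 2 x\<^sup>2 (m/2 - \<bar>y\<bar>) \<ge> x\<^sup>2 m / 2\<close>, where \<open>m = \<bar>x\<bar> powr a\<close> does not decrease.\<close>

lemma cusp_fst_sq_growth:
  assumes sol: "sol_on (vf a) p T \<gamma>" and in_cusp: "\<And>t. t \<in> {0..T} \<Longrightarrow> \<gamma> t \<in> cusp a"
    and t: "t \<in> {0..T}"
  shows "(fst p)^2 + (1/2) * ((fst p)^2 * \<bar>fst p\<bar> powr a) * t \<le> (fst (\<gamma> t))^2"
proof -
  define k where "k = (1/2) * ((fst p)^2 * \<bar>fst p\<bar> powr a)"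
  have growth: "\<bar>fst (\<gamma> t)\<bar> powr a / 4 \<le> (1/2) * \<bar>fst (\<gamma> t)\<bar> powr a - \<bar>snd (\<gamma> t)\<bar>"
    if "t \<in> {0..T}" for t
    using in_cusp[OF that] by (simp add: cusp_def)
  have x_mono: "(fst p)^2 \<le> (fst (\<gamma> t))^2" if "t \<in> {0..T}" for t
    using has_real_derivative_nonneg_imp_mono[OF sol_has_real_derivatives(4)[OF sol], of 0 t] growth that
      sol_onD(2)[OF sol]
    by (force intro: mult_nonneg_nonneg order_trans[OF divide_nonneg_pos[OF powr_ge_zero]])
  have "(fst (\<gamma> 0))^2 - k * 0 \<le> (fst (\<gamma> t))^2 - k * t"
  proof (rule has_real_derivative_nonneg_imp_mono[where f="\<lambda>t. (fst (\<gamma> t))^2 - k * t"])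
    fix u assume u: "u \<in> {0..T}"
    show "((\<lambda>t. (fst (\<gamma> t))^2 - k * t) has_real_derivative
        2 * (fst (\<gamma> u))^2 * ((1/2) * \<bar>fst (\<gamma> u)\<bar> powr a - \<bar>snd (\<gamma> u)\<bar>) - k) (at u within {0..T})"
      using DERIV_diff[OF sol_has_real_derivatives(4)[OF sol u] DERIV_cmult[OF DERIV_ident, of k]]
      by simp
    have "\<bar>fst p\<bar> \<le> \<bar>fst (\<gamma> u)\<bar>" using x_mono[OF u] by (simp add: abs_le_square_iff)
    then have "\<bar>fst p\<bar> powr a \<le> \<bar>fst (\<gamma> u)\<bar> powr a" using a_pos by (intro powr_mono2) auto
    then have "(fst p)^2 * \<bar>fst p\<bar> powr a \<le> (fst (\<gamma> u))^2 * \<bar>fst (\<gamma> u)\<bar> powr a"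
      using x_mono[OF u] by (intro mult_mono) simp_all
    then have "k \<le> 2 * (fst (\<gamma> u))^2 * (\<bar>fst (\<gamma> u)\<bar> powr a / 4)"
      unfolding k_def by (simp add: mult_ac)
    also have "\<dots> \<le> 2 * (fst (\<gamma> u))^2 * ((1/2) * \<bar>fst (\<gamma> u)\<bar> powr a - \<bar>snd (\<gamma> u)\<bar>)"
      using growth[OF u] by (intro mult_left_mono) auto
    finally show "0 \<le> 2 * (fst (\<gamma> u))^2 * ((1/2) * \<bar>fst (\<gamma> u)\<bar> powr a - \<bar>snd (\<gamma> u)\<bar>) - k"
      by simp
  qed (use t in auto)
  then show ?thesis using sol_onD(2)[OF sol] by (simp add: k_def)
qed

lemma cusp_escapes:
  assumes sol: "complete_sol (vf a) p \<gamma>" and p: "p \<in> cusp a" and \<delta>: "0 < \<delta>" "\<delta> powr a \<le> a"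
  shows "\<exists>t\<ge>0. \<delta> \<le> norm (\<gamma> t)"
proof (rule ccontr)
  assume "\<not> (\<exists>t\<ge>0. \<delta> \<le> norm (\<gamma> t))"
  then have x_small: "\<bar>fst (\<gamma> t)\<bar> < \<delta>" if "0 \<le> t" for t
    using that norm_fst_le[of "fst (\<gamma> t)" "snd (\<gamma> t)"] by force
  define k where "k = (1/2) * ((fst p)^2 * \<bar>fst p\<bar> powr a)"
  have k: "0 < k" using p by (simp add: k_def cusp_def)
  define T where "T = \<delta>^2 / k + 1"
  have T: "0 \<le> T" using k by (simp add: T_def)
  have sol_T: "sol_on (vf a) p T \<gamma>" by (rule complete_sol_imp_sol_on[OF sol T])
  have "\<gamma> t \<in> cusp a" if "t \<in> {0..T}" for t
  proof (rule cusp_invariant[OF sol_T p _ that])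
    fix s assume "s \<in> {0..T}"
    then have "\<bar>fst (\<gamma> s)\<bar> powr a < \<delta> powr a" using x_small a_pos by (intro powr_less_mono2) auto
    with \<delta> show "\<bar>fst (\<gamma> s)\<bar> powr a < a" by linarith
  qed
  from cusp_fst_sq_growth[OF sol_T this, of T] T
  have "(fst p)^2 + k * T \<le> (fst (\<gamma> T))^2" by (simp add: k_def)
  moreover have "\<bar>fst (\<gamma> T)\<bar>^2 < \<delta>^2"
    using x_small[OF T] by (intro power_strict_mono) auto
  moreover have "k * T = \<delta>^2 + k" using k by (simp add: T_def field_simps)
  ultimately show False using k zero_le_power2[of "fst p"] by simp
qed

lemma cusp_meets_density_1_set:
  assumes a1: "a < 1" and N: "N \<in> sets lebesgue" and e0: "0 < e0"
    and lim: "((\<lambda>\<epsilon>. measure lebesgue (ball 0 \<epsilon> \<inter> N) / measure lebesgue (ball (0::pt) \<epsilon>)) \<longlongrightarrow> 1)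
      (at_right 0)"
  shows "\<exists>p \<in> ball 0 e0 \<inter> N. p \<in> cusp a"
proof -
  have "\<forall>\<^sub>F \<epsilon> in at_right 0. measure lebesgue (ball 0 \<epsilon> - cusp a) / measure lebesgue (ball (0::pt) \<epsilon>) < 1/2"
    by (rule order_tendstoD(2)[OF ball_diff_cusp_density_0[OF a1]]) simp
  moreover have "\<forall>\<^sub>F \<epsilon> in at_right 0. 1/2 < measure lebesgue (ball 0 \<epsilon> \<inter> N) / measure lebesgue (ball (0::pt) \<epsilon>)"
    by (rule order_tendstoD(1)[OF lim]) simp
  moreover have "\<forall>\<^sub>F \<epsilon> in at_right 0. \<epsilon> \<in> {0<..<e0}"
    by (rule eventually_at_right_real[OF e0])
  ultimately have "\<forall>\<^sub>F \<epsilon> in at_right 0. \<epsilon> \<in> {0<..<e0} \<and>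
      measure lebesgue (ball 0 \<epsilon> - cusp a) < measure lebesgue (ball 0 \<epsilon> \<inter> N)"
  proof eventually_elim
    case (elim \<epsilon>)
    then have "0 < measure lebesgue (ball (0::pt) \<epsilon>)" by (simp add: content_ball_pos)
    with elim show ?case by (auto simp: divide_less_cancel)
  qed
  then obtain \<epsilon> where \<epsilon>: "0 < \<epsilon>" "\<epsilon> < e0"
    and dens: "measure lebesgue (ball 0 \<epsilon> - cusp a) < measure lebesgue (ball 0 \<epsilon> \<inter> N)"
    using eventually_happens[of _ "at_right (0::real)"] by auto
  have "ball 0 \<epsilon> \<inter> N \<inter> cusp a \<noteq> {}"
  proof
    assume "ball 0 \<epsilon> \<inter> N \<inter> cusp a = {}"
    then have "ball 0 \<epsilon> \<inter> N \<subseteq> ball 0 \<epsilon> - cusp a" by blast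
    then have "measure lebesgue (ball 0 \<epsilon> \<inter> N) \<le> measure lebesgue (ball 0 \<epsilon> - cusp a)"
      using N open_cusp
      by (intro measure_mono_fmeasurable) (auto intro: fmeasurableI2[OF lmeasurable_ball])
    with dens show False by simp
  qed
  with \<epsilon> show ?thesis by auto
qed

theorem not_ess_as_origin:
  assumes a1: "a < 1"
  shows "\<not> ess_as (vf a) {0}"
proof
  assume "ess_as (vf a) {0}"
  then obtain N where N: "N \<in> sets lebesgue" and rel: "as_rel (vf a) {0} N"
    and lim: "((\<lambda>\<epsilon>. measure lebesgue (ball 0 \<epsilon> \<inter> N) / measure lebesgue (ball (0::pt) \<epsilon>)) \<longlongrightarrow> 1)
      (at_right 0)"
    unfolding ess_as_def by auto
  define \<delta> where "\<delta> = a powr (1/a)"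
  have \<delta>: "0 < \<delta>" "\<delta> powr a \<le> a" using a_pos by (auto simp: \<delta>_def powr_powr)
  have "\<exists>V. open V \<and> {0} \<subseteq> V \<and> (\<forall>p\<in>V \<inter> N. stays_in (vf a) p (ball 0 \<delta>))"
    using rel[unfolded as_rel_def, THEN conjunct1, rule_format, of "ball 0 \<delta>"] \<delta>(1) by simp
  then obtain V where V: "open V" "0 \<in> V" "\<And>p. p \<in> V \<inter> N \<Longrightarrow> stays_in (vf a) p (ball 0 \<delta>)"
    by auto
  obtain W where W: "open W" "0 \<in> W" "\<And>p. p \<in> W \<inter> N \<Longrightarrow> attracted (vf a) {0} p"
    using rel unfolding as_rel_def by auto
  obtain e0 where e0: "0 < e0" "ball 0 e0 \<subseteq> V \<inter> W"
    using V W open_contains_ball_eq[OF open_Int[OF V(1) W(1)]] by blast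
  then obtain p where p: "p \<in> V \<inter> N" "p \<in> W \<inter> N" "p \<in> cusp a"
    using cusp_meets_density_1_set[OF a1 N e0(1) lim] by blast
  then obtain \<gamma> where sol: "complete_sol (vf a) p \<gamma>"
    using W(3) unfolding attracted_def by blast
  have "norm (\<gamma> t) < \<delta>" if "0 \<le> t" for t
    using V(3)[OF p(1)] complete_sol_imp_sol_on[OF sol that] that by (auto simp: stays_in_def)
  with cusp_escapes[OF sol p(3) \<delta>] show False by force
qed

end

theorem corollary4:
  fixes a :: real
  assumes "0 < a" and "a < 1"
  shows "frag_as (vf a) {0} \<and> \<not> ess_as (vf a) {0}"
proof -
  interpret planar_system a by unfold_locales (rule assms(1))
  show ?thesis using frag_as_origin not_ess_as_origin[OF assms(2)] by blast
qed

end
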